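(* Let $\Phi(s),\Phi'(s)$, $s\in[0,t]$, be time-dependent potentials and $\kappa>0$. Let $\lambda=\max\{\|\Phi\|_\kappa,\|\Phi'\|_\kappa\}$ and suppose $24\lambda t\leq\kappa$. Let $O$ be an operator supported on a set $S\subseteq\Lambda$, regarded as a potential with the single term $O_S=O$. Let $\Delta(s)=\Phi(s)-\Phi'(s)$, $\mathcal{M}=288/\kappa^2$ and $\mathcal{C}=1+\mathcal{M}\lambda t$ (so $\mathcal{C}\leq1+12/\kappa$). Then $$\|\mathcal{E}_\Phi(t)O-\mathcal{E}_{\Phi'}(t)O\|\leq\mathcal{C}^3\mathcal{M}\,e^{\kappa|S|}\,\|O\|\,t\,\|\Delta\|_\kappa,$$ where on the left the potentials $\mathcal{E}_\Phi(t)O$, $\mathcal{E}_{\Phi'}(t)O$ are identified with their associated operators and $\|\cdot\|$ is the operator norm.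
   Context: $\Lambda$ is a finite set of sites, each carrying a finite-dimensional Hilbert space; $\|\cdot\|$ is the operator norm. A potential $Q$ is a family of operators $Q_Z$, $Z\subseteq\Lambda$, with $Q_Z$ supported on $Z$; its associated operator is $\sum_Z Q_Z$; differences are termwise. Norm: $\|Q\|_\kappa=\sup_{x\in\Lambda}\sum_{Z\ni x}e^{\kappa|Z|}\|Q_Z\|$; for time-dependent potentials on $[0,t]$, $\|\Phi\|_\kappa=\frac1t\int_0^t\|\Phi(s)\|_\kappa ds$. Commutator of potentials: $(\mathrm{ad}_\Phi\Theta)_Z=\sum_{Z_1\cap Z_2\neq\emptyset,Z_1\cup Z_2=Z}[\Phi_{Z_1},\Theta_{Z_2}]$. Dyson-series evolution: $\mathcal{E}_\Phi(t)\Theta=\sum_{n\geq0}i^n\int_0^t dt_1\int_0^{t_1}dt_2\cdots\int_0^{t_{n-1}}dt_n\,\mathrm{ad}_{\Phi(t_1)}\cdots\mathrm{ad}_{\Phi(t_n)}\Theta$. *)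

theory Defs
  imports "HOL-Analysis.Analysis"
begin

text \<open>Quantum spin system on a finite set of sites \<open>\<Lambda>\<close>; site \<open>x\<close> carries the
Hilbert space \<open>\<complex>^(d x)\<close>.  The total Hilbert space is \<open>\<ell>\<^sup>2\<close> over the set of
configurations (basis states of the tensor product).\<close>

type_synonym 's config = "'s \<Rightarrow> nat"
type_synonym 's op = "'s config \<Rightarrow> 's config \<Rightarrow> complex"
type_synonym 's pot = "'s set \<Rightarrow> 's op"

definition configs :: "'s set \<Rightarrow> ('s \<Rightarrow> nat) \<Rightarrow> 's config set" where
  "configs \<Lambda> d = PiE \<Lambda> (\<lambda>x. {..<d x})"

definition mmult :: "'s config set \<Rightarrow> 's op \<Rightarrow> 's op \<Rightarrow> 's op" where
  "mmult C A B = (\<lambda>\<sigma> \<tau>. \<Sum>\<rho>\<in>C. A \<sigma> \<rho> * B \<rho> \<tau>)"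

definition comm :: "'s config set \<Rightarrow> 's op \<Rightarrow> 's op \<Rightarrow> 's op" where
  "comm C A B = (\<lambda>\<sigma> \<tau>. mmult C A B \<sigma> \<tau> - mmult C B A \<sigma> \<tau>)"

definition opnorm :: "'s config set \<Rightarrow> 's op \<Rightarrow> real" where
  "opnorm C A = Sup {sqrt (\<Sum>\<sigma>\<in>C. (cmod (\<Sum>\<tau>\<in>C. A \<sigma> \<tau> * v \<tau>))\<^sup>2) | v.
                      (\<Sum>\<tau>\<in>C. (cmod (v \<tau>))\<^sup>2) \<le> 1}"

text \<open>\<open>A\<close> is supported on \<open>Z\<close>: \<open>A = B \<otimes> 1\<^bsub>\<Lambda>-Z\<^esub>\<close>.\<close>
definition supported_on :: "'s set \<Rightarrow> ('s \<Rightarrow> nat) \<Rightarrow> 's set \<Rightarrow> 's op \<Rightarrow> bool" where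
  "supported_on \<Lambda> d Z A \<longleftrightarrow> Z \<subseteq> \<Lambda> \<and>
     (\<exists>B. \<forall>\<sigma>\<in>configs \<Lambda> d. \<forall>\<tau>\<in>configs \<Lambda> d.
        A \<sigma> \<tau> = (if (\<forall>x\<in>\<Lambda> - Z. \<sigma> x = \<tau> x)
                  then B (restrict \<sigma> Z) (restrict \<tau> Z) else 0))"

definition assoc_op :: "'s set \<Rightarrow> 's pot \<Rightarrow> 's op" where
  "assoc_op \<Lambda> Q = (\<lambda>\<sigma> \<tau>. \<Sum>Z\<in>Pow \<Lambda>. Q Z \<sigma> \<tau>)"

definition pot_diff :: "'s pot \<Rightarrow> 's pot \<Rightarrow> 's pot" where
  "pot_diff P Q = (\<lambda>Z \<sigma> \<tau>. P Z \<sigma> \<tau> - Q Z \<sigma> \<tau>)"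

definition single_pot :: "'s set \<Rightarrow> 's op \<Rightarrow> 's pot" where
  "single_pot S Ob = (\<lambda>Z. if Z = S then Ob else (\<lambda>_ _. 0))"

text \<open>\<open>\<parallel>Q\<parallel>\<^sub>\<kappa> = sup\<^sub>x \<Sum>\<^bsub>Z\<ni>x\<^esub> e^(\<kappa>|Z|) \<parallel>Q\<^sub>Z\<parallel>\<close> (supremum over empty \<open>\<Lambda>\<close> taken as 0).\<close>
definition pot_norm :: "'s set \<Rightarrow> ('s \<Rightarrow> nat) \<Rightarrow> real \<Rightarrow> 's pot \<Rightarrow> real" where
  "pot_norm \<Lambda> d \<kappa> Q = Max (insert 0 ((\<lambda>x. \<Sum>Z\<in>{Z. Z \<subseteq> \<Lambda> \<and> x \<in> Z}.
        exp (\<kappa> * real (card Z)) * opnorm (configs \<Lambda> d) (Q Z)) ` \<Lambda>))"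

definition tpot_norm :: "'s set \<Rightarrow> ('s \<Rightarrow> nat) \<Rightarrow> real \<Rightarrow> real \<Rightarrow> (real \<Rightarrow> 's pot) \<Rightarrow> real" where
  "tpot_norm \<Lambda> d \<kappa> t \<Phi> = (1 / t) * integral {0..t} (\<lambda>s. pot_norm \<Lambda> d \<kappa> (\<Phi> s))"

definition ad_pot :: "'s set \<Rightarrow> ('s \<Rightarrow> nat) \<Rightarrow> 's pot \<Rightarrow> 's pot \<Rightarrow> 's pot" where
  "ad_pot \<Lambda> d P Q = (\<lambda>Z \<sigma> \<tau>.
      \<Sum>(Z1, Z2)\<in>{(Z1, Z2). Z1 \<subseteq> \<Lambda> \<and> Z2 \<subseteq> \<Lambda> \<and> Z1 \<inter> Z2 \<noteq> {} \<and> Z1 \<union> Z2 = Z}.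
         comm (configs \<Lambda> d) (P Z1) (Q Z2) \<sigma> \<tau>)"

text \<open>Iterated simplex integral
  \<open>\<integral>\<^sub>0\<^sup>u dt\<^sub>1 \<integral>\<^sub>0\<^sup>t\<^sup>1 dt\<^sub>2 \<dots> \<integral>\<^sub>0\<^sup>t\<^sup>n\<^sup>-\<^sup>1 dt\<^sub>n F [t\<^sub>1,\<dots>,t\<^sub>n]\<close>, entrywise.\<close>
fun iter_int :: "nat \<Rightarrow> real \<Rightarrow> (real list \<Rightarrow> 's pot) \<Rightarrow> 's pot" where
  "iter_int 0 u F = F []"
| "iter_int (Suc n) u F =
     (\<lambda>Z \<sigma> \<tau>. integral {0..u} (\<lambda>s. iter_int n s (\<lambda>ts. F (s # ts)) Z \<sigma> \<tau>))"

definition dyson :: "'s set \<Rightarrow> ('s \<Rightarrow> nat) \<Rightarrow> (real \<Rightarrow> 's pot) \<Rightarrow> real \<Rightarrow> 's pot \<Rightarrow> 's pot" where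
  "dyson \<Lambda> d \<Phi> t \<Theta> = (\<lambda>Z \<sigma> \<tau>. \<Sum>n. \<i> ^ n *
      iter_int n t (\<lambda>ts. foldr (\<lambda>s acc. ad_pot \<Lambda> d (\<Phi> s) acc) ts \<Theta>) Z \<sigma> \<tau>)"

definition tpot :: "'s set \<Rightarrow> ('s \<Rightarrow> nat) \<Rightarrow> real \<Rightarrow> (real \<Rightarrow> 's pot) \<Rightarrow> bool" where
  "tpot \<Lambda> d t \<Phi> \<longleftrightarrow>
     (\<forall>s\<in>{0..t}. \<forall>Z. Z \<subseteq> \<Lambda> \<longrightarrow> supported_on \<Lambda> d Z (\<Phi> s Z)) \<and>
     (\<forall>Z. Z \<subseteq> \<Lambda> \<longrightarrow> (\<forall>\<sigma>\<in>configs \<Lambda> d. \<forall>\<tau>\<in>configs \<Lambda> d.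
        (\<lambda>s. \<Phi> s Z \<sigma> \<tau>) \<in> borel_measurable (restrict_space lborel {0..t}) \<and>
        bounded ((\<lambda>s. \<Phi> s Z \<sigma> \<tau>) ` {0..t})))"

end

theory Submission
  imports Defs
begin

text \<open>Expanding both evolutions in their Dyson series, the \<open>n\<close>-th term
  \<open>D\<^sub>n(u) = \<integral>\<^sub>0\<^sup>u ad\<^bsub>\<Phi>(s)\<^esub> D\<^sub>n\<^sub>-\<^sub>1(s) ds\<close> is estimated in a norm whose decay rate drops from
  \<open>\<kappa>\<close> to \<open>\<kappa>/3\<close> in \<open>n\<close> equal steps.  Each step costs the factor \<open>4/(e h)\<close> of the commutator
  estimate \<open>\<parallel>ad\<^bsub>P\<^esub> Q\<parallel>\<^bsub>k-h\<^esub> \<le> 4/(e h) \<parallel>P\<parallel>\<^sub>k \<parallel>Q\<parallel>\<^sub>k\<close>, while the time-ordered integral contributes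
  \<open>A\<^sup>n/n!\<close> with \<open>A = \<integral>\<^sub>0\<^sup>t \<parallel>\<Phi>(s)\<parallel>\<^sub>\<kappa> ds \<le> \<kappa>/24\<close>; hence \<open>\<parallel>D\<^sub>n(t)\<parallel>\<^bsub>\<kappa>/3\<^esub> \<le> 4\<^sup>-\<^sup>n \<parallel>O\<parallel>\<^sub>\<kappa>\<close>.
  The difference \<open>E\<^sub>n\<close> of the \<open>n\<close>-th terms for \<open>\<Phi>\<close> and \<open>\<Phi>'\<close> satisfies a Duhamel recursion
  driven by \<open>\<Delta> = \<Phi> - \<Phi>'\<close> and obeys \<open>\<parallel>E\<^sub>n(t)\<parallel>\<^bsub>\<kappa>/3\<^esub> \<le> (6/\<kappa>) n\<^sup>2 2\<^sup>1\<^sup>-\<^sup>n t \<parallel>\<Delta>\<parallel>\<^sub>\<kappa> \<parallel>O\<parallel>\<^sub>\<kappa>\<close>.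
  All terms of \<open>E\<^sub>n\<close> contain a fixed site of \<open>S\<close>, so the associated operator has norm at
  most \<open>e\<^sup>-\<^sup>\<kappa>\<^sup>/\<^sup>3 \<parallel>E\<^sub>n\<parallel>\<^bsub>\<kappa>/3\<^esub>\<close>; summing over \<open>n\<close> gives \<open>e\<^sup>-\<^sup>\<kappa>\<^sup>/\<^sup>3 (192/\<kappa>) t \<parallel>\<Delta>\<parallel>\<^sub>\<kappa> e\<^sup>\<kappa>\<^sup>|\<^sup>S\<^sup>| \<parallel>O\<parallel>\<close>, and
  \<open>e\<^sup>\<kappa>\<^sup>/\<^sup>3 \<ge> 2\<kappa>/3\<close> turns the prefactor into \<open>M = 288/\<kappa>\<^sup>2 \<le> C\<^sup>3 M\<close>.\<close>

section \<open>Operators on a finite configuration space\<close>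

definition op_apply :: "'c set \<Rightarrow> ('c \<Rightarrow> 'c \<Rightarrow> complex) \<Rightarrow> ('c \<Rightarrow> complex) \<Rightarrow> 'c \<Rightarrow> complex" where
  "op_apply C A v = (\<lambda>\<sigma>. \<Sum>\<tau>\<in>C. A \<sigma> \<tau> * v \<tau>)"

definition l2_norm :: "'c set \<Rightarrow> ('c \<Rightarrow> complex) \<Rightarrow> real" where
  "l2_norm C v = L2_set (\<lambda>\<tau>. cmod (v \<tau>)) C"

definition op_form :: "'c set \<Rightarrow> ('c \<Rightarrow> 'c \<Rightarrow> complex) \<Rightarrow> ('c \<Rightarrow> complex) \<Rightarrow> ('c \<Rightarrow> complex) \<Rightarrow> complex"
  where "op_form C A u v = (\<Sum>\<sigma>\<in>C. \<Sum>\<tau>\<in>C. cnj (u \<sigma>) * A \<sigma> \<tau> * v \<tau>)"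

definition entry_norm_sum :: "'c set \<Rightarrow> ('c \<Rightarrow> 'c \<Rightarrow> complex) \<Rightarrow> real" where
  "entry_norm_sum C A = (\<Sum>\<sigma>\<in>C. \<Sum>\<tau>\<in>C. cmod (A \<sigma> \<tau>))"

lemma l2_norm_nonneg: "0 \<le> l2_norm C v"
  by (simp add: l2_norm_def L2_set_nonneg)

lemma l2_norm_zero [simp]: "l2_norm C (\<lambda>_. 0) = 0"
  by (simp add: l2_norm_def L2_set_def)

lemma l2_norm_cong: "(\<And>x. x \<in> C \<Longrightarrow> v x = w x) \<Longrightarrow> l2_norm C v = l2_norm C w"
  unfolding l2_norm_def by (rule L2_set_cong) auto

lemma l2_norm_scale: "l2_norm C (\<lambda>x. c * v x) = cmod c * l2_norm C v"
  unfolding l2_norm_def by (simp add: norm_mult L2_set_right_distrib)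

lemma l2_norm_triangle: "l2_norm C (\<lambda>x. v x + w x) \<le> l2_norm C v + l2_norm C w"
proof -
  have "l2_norm C (\<lambda>x. v x + w x) \<le> L2_set (\<lambda>x. cmod (v x) + cmod (w x)) C"
    unfolding l2_norm_def by (rule L2_set_mono) (auto intro: norm_triangle_ineq)
  also have "\<dots> \<le> l2_norm C v + l2_norm C w"
    unfolding l2_norm_def by (rule L2_set_triangle_ineq)
  finally show ?thesis .
qed

lemma l2_norm_le_sum: "l2_norm C v \<le> (\<Sum>x\<in>C. cmod (v x))"
  unfolding l2_norm_def by (rule L2_set_le_sum) simp

lemma norm_le_l2_norm: "finite C \<Longrightarrow> x \<in> C \<Longrightarrow> cmod (v x) \<le> l2_norm C v"
  unfolding l2_norm_def by (rule member_le_L2_set) auto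

lemma l2_norm_eq_0_iff: "finite C \<Longrightarrow> l2_norm C v = 0 \<longleftrightarrow> (\<forall>x\<in>C. v x = 0)"
  unfolding l2_norm_def by (simp add: L2_set_eq_0_iff)

lemma opnorm_eq_Sup: "opnorm C A = Sup {l2_norm C (op_apply C A v) | v. l2_norm C v \<le> 1}"
  by (simp add: opnorm_def l2_norm_def op_apply_def L2_set_def)

lemma norm_sum_cnj_mult_le: "cmod (\<Sum>\<sigma>\<in>C. cnj (u \<sigma>) * w \<sigma>) \<le> l2_norm C u * l2_norm C w"
proof -
  have "cmod (\<Sum>\<sigma>\<in>C. cnj (u \<sigma>) * w \<sigma>) \<le> (\<Sum>\<sigma>\<in>C. cmod (u \<sigma>) * cmod (w \<sigma>))"
    by (rule order_trans[OF norm_sum]) (simp add: norm_mult)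
  also have "\<dots> \<le> l2_norm C u * l2_norm C w"
    using L2_set_mult_ineq[of "\<lambda>\<sigma>. cmod (u \<sigma>)" "\<lambda>\<sigma>. cmod (w \<sigma>)" C] by (simp add: l2_norm_def)
  finally show ?thesis .
qed

lemma op_form_eq: "op_form C A u v = (\<Sum>\<sigma>\<in>C. cnj (u \<sigma>) * op_apply C A v \<sigma>)"
  by (simp add: op_form_def op_apply_def sum_distrib_left mult.assoc)

lemma op_apply_scale: "op_apply C A (\<lambda>x. c * v x) = (\<lambda>\<sigma>. c * op_apply C A v \<sigma>)"
  by (simp add: op_apply_def sum_distrib_left algebra_simps)

lemma op_apply_add: "op_apply C A (\<lambda>x. v x + w x) = (\<lambda>\<sigma>. op_apply C A v \<sigma> + op_apply C A w \<sigma>)"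
  by (simp add: op_apply_def algebra_simps sum.distrib)

lemma op_apply_mmult: "op_apply C (mmult C A B) v = op_apply C A (op_apply C B v)"
  unfolding op_apply_def mmult_def
  by (rule ext) (simp add: sum_distrib_left sum_distrib_right mult.assoc, rule sum.swap)

lemma op_form_sum: "op_form C (\<lambda>\<sigma> \<tau>. \<Sum>i\<in>I. f i \<sigma> \<tau>) u v = (\<Sum>i\<in>I. op_form C (f i) u v)"
  unfolding op_form_def
  by (simp add: sum_distrib_left sum_distrib_right) (subst sum.swap, rule sum.cong, simp, subst sum.swap, simp)

lemma op_form_add: "op_form C (\<lambda>\<sigma> \<tau>. A \<sigma> \<tau> + B \<sigma> \<tau>) u v = op_form C A u v + op_form C B u v"
  unfolding op_form_def by (simp add: algebra_simps sum.distrib)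

lemma op_form_diff: "op_form C (\<lambda>\<sigma> \<tau>. A \<sigma> \<tau> - B \<sigma> \<tau>) u v = op_form C A u v - op_form C B u v"
  unfolding op_form_def by (simp add: algebra_simps sum_subtractf)

lemma op_form_scale: "op_form C (\<lambda>\<sigma> \<tau>. c * A \<sigma> \<tau>) u v = c * op_form C A u v"
  unfolding op_form_def by (simp add: algebra_simps sum_distrib_left)

lemma opnorm_cong:
  "(\<And>\<sigma> \<tau>. \<sigma> \<in> C \<Longrightarrow> \<tau> \<in> C \<Longrightarrow> A \<sigma> \<tau> = B \<sigma> \<tau>) \<Longrightarrow> opnorm C A = opnorm C B"
  unfolding opnorm_def by (rule arg_cong[where f=Sup]) (auto intro!: sum.cong arg_cong[where f=sqrt])

context
  fixes C :: "'s config set"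
  assumes finite_C: "finite C"
begin

lemma l2_norm_op_apply_le_entry_norm_sum:
  assumes "\<And>\<tau>. \<tau> \<in> C \<Longrightarrow> cmod (v \<tau>) \<le> b"
  shows "l2_norm C (op_apply C A v) \<le> entry_norm_sum C A * b"
proof -
  have "l2_norm C (op_apply C A v) \<le> (\<Sum>\<sigma>\<in>C. cmod (op_apply C A v \<sigma>))"
    by (rule l2_norm_le_sum)
  also have "\<dots> \<le> (\<Sum>\<sigma>\<in>C. \<Sum>\<tau>\<in>C. cmod (A \<sigma> \<tau>) * b)"
  proof (rule sum_mono)
    fix \<sigma>
    have "cmod (op_apply C A v \<sigma>) \<le> (\<Sum>\<tau>\<in>C. cmod (A \<sigma> \<tau> * v \<tau>))"
      unfolding op_apply_def by (rule norm_sum)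
    also have "\<dots> \<le> (\<Sum>\<tau>\<in>C. cmod (A \<sigma> \<tau>) * b)"
      unfolding norm_mult by (intro sum_mono mult_left_mono assms norm_ge_zero)
    finally show "cmod (op_apply C A v \<sigma>) \<le> (\<Sum>\<tau>\<in>C. cmod (A \<sigma> \<tau>) * b)" .
  qed
  finally show ?thesis by (simp add: entry_norm_sum_def sum_distrib_right)
qed

lemma l2_norm_op_apply_le_entry_norm_sum_unit:
  "l2_norm C v \<le> 1 \<Longrightarrow> l2_norm C (op_apply C A v) \<le> entry_norm_sum C A"
  using l2_norm_op_apply_le_entry_norm_sum[of v 1 A] norm_le_l2_norm[OF finite_C, of _ v] by force

lemma bdd_above_opnorm_set: "bdd_above {l2_norm C (op_apply C A v) | v. l2_norm C v \<le> 1}"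
  by (rule bdd_aboveI[of _ "entry_norm_sum C A"]) (auto intro: l2_norm_op_apply_le_entry_norm_sum_unit)

lemma opnorm_upper: "l2_norm C v \<le> 1 \<Longrightarrow> l2_norm C (op_apply C A v) \<le> opnorm C A"
  unfolding opnorm_eq_Sup by (rule cSup_upper[OF _ bdd_above_opnorm_set]) auto

lemma opnorm_least:
  assumes "\<And>v. l2_norm C v \<le> 1 \<Longrightarrow> l2_norm C (op_apply C A v) \<le> M"
  shows "opnorm C A \<le> M"
proof -
  have "l2_norm C (op_apply C A (\<lambda>_. 0)) \<in> {l2_norm C (op_apply C A v) | v. l2_norm C v \<le> 1}"
    by auto
  then show ?thesis
    unfolding opnorm_eq_Sup by (intro cSup_least) (auto intro: assms)
qed

lemma opnorm_nonneg: "0 \<le> opnorm C A"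
  using opnorm_upper[of "\<lambda>_. 0" A] l2_norm_nonneg[of C "op_apply C A (\<lambda>_. 0)"] by simp

lemma opnorm_le_entry_norm_sum: "opnorm C A \<le> entry_norm_sum C A"
  by (intro opnorm_least l2_norm_op_apply_le_entry_norm_sum_unit)

lemma l2_norm_op_apply_le: "l2_norm C (op_apply C A v) \<le> opnorm C A * l2_norm C v"
proof (cases "l2_norm C v = 0")
  case True
  then have "l2_norm C (op_apply C A v) = 0"
    by (simp add: l2_norm_eq_0_iff[OF finite_C] op_apply_def)
  then show ?thesis by (simp add: True)
next
  case False
  then have pos: "0 < l2_norm C v" using l2_norm_nonneg[of C v] by simp
  define c where "c = complex_of_real (1 / l2_norm C v)"
  have c: "cmod c * l2_norm C v = 1"
    using pos by (simp add: c_def norm_divide)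
  have "cmod c * l2_norm C (op_apply C A v) = l2_norm C (op_apply C A (\<lambda>x. c * v x))"
    by (simp add: op_apply_scale l2_norm_scale)
  also have "\<dots> \<le> opnorm C A"
    by (rule opnorm_upper) (simp add: l2_norm_scale c)
  finally show ?thesis
    using pos c by (simp add: c_def norm_divide field_simps)
qed

lemma norm_op_form_le: "cmod (op_form C A u v) \<le> opnorm C A * l2_norm C u * l2_norm C v"
proof -
  have "cmod (op_form C A u v) \<le> l2_norm C u * l2_norm C (op_apply C A v)"
    unfolding op_form_eq by (rule norm_sum_cnj_mult_le)
  also have "\<dots> \<le> l2_norm C u * (opnorm C A * l2_norm C v)"
    by (rule mult_left_mono[OF l2_norm_op_apply_le l2_norm_nonneg])
  finally show ?thesis by (simp add: algebra_simps)
qed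

lemma norm_op_form_le_opnorm:
  "l2_norm C u \<le> 1 \<Longrightarrow> l2_norm C v \<le> 1 \<Longrightarrow> cmod (op_form C A u v) \<le> opnorm C A"
  using norm_op_form_le[of A u v]
    mult_mono[of "opnorm C A * l2_norm C u" "opnorm C A" "l2_norm C v" 1]
    mult_left_mono[of "l2_norm C u" 1 "opnorm C A"]
  by (simp add: opnorm_nonneg l2_norm_nonneg)

text \<open>The bound is tested against \<open>u = A v / \<parallel>A v\<parallel>\<close>.\<close>
lemma opnorm_le_formI:
  assumes "\<And>u v. l2_norm C u \<le> 1 \<Longrightarrow> l2_norm C v \<le> 1 \<Longrightarrow> cmod (op_form C A u v) \<le> M"
  shows "opnorm C A \<le> M"
proof (rule opnorm_least)
  fix v assume v: "l2_norm C v \<le> 1"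
  define w where "w = op_apply C A v"
  show "l2_norm C (op_apply C A v) \<le> M"
  proof (cases "l2_norm C w = 0")
    case True
    then show ?thesis using assms[of "\<lambda>_. 0" v] v by (simp add: w_def op_form_def)
  next
    case False
    then have pos: "0 < l2_norm C w" using l2_norm_nonneg[of C w] by simp
    define u where "u x = complex_of_real (1 / l2_norm C w) * w x" for x
    have "l2_norm C u = cmod (complex_of_real (1 / l2_norm C w)) * l2_norm C w"
      unfolding u_def by (rule l2_norm_scale)
    then have u: "l2_norm C u = 1" using pos by (simp add: norm_divide)
    have "op_form C A u v = (\<Sum>\<sigma>\<in>C. complex_of_real (1 / l2_norm C w) * complex_of_real ((cmod (w \<sigma>))\<^sup>2))"
      unfolding op_form_eq w_def[symmetric]
      by (intro sum.cong refl) (simp add: u_def complex_norm_square[symmetric] mult_ac)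
    also have "\<dots> = complex_of_real (1 / l2_norm C w) * (\<Sum>\<sigma>\<in>C. complex_of_real ((cmod (w \<sigma>))\<^sup>2))"
      by (rule sum_distrib_left[symmetric])
    also have "\<dots> = complex_of_real (1 / l2_norm C w * (l2_norm C w)\<^sup>2)"
      by (simp add: l2_norm_def L2_set_def sum_nonneg)
    also have "\<dots> = complex_of_real (l2_norm C w)"
      using pos by (simp add: power2_eq_square)
    finally have "cmod (op_form C A u v) = l2_norm C w" using pos by simp
    then show ?thesis using assms[OF _ v, of u] u by (simp add: w_def)
  qed
qed

lemma norm_entry_le_opnorm:
  assumes "\<sigma> \<in> C" "\<tau> \<in> C"
  shows "cmod (A \<sigma> \<tau>) \<le> opnorm C A"
proof -
  define v where "v x = (if x = \<tau> then 1 else 0 :: complex)" for x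
  have "l2_norm C v = L2_set (\<lambda>x. if x = \<tau> then 1 else 0) C"
    unfolding l2_norm_def by (rule L2_set_cong) (auto simp: v_def)
  also have "\<dots> = sqrt (\<Sum>x\<in>C. if x = \<tau> then 1 else 0)"
    unfolding L2_set_def by (intro arg_cong[where f=sqrt] sum.cong) auto
  also have "\<dots> = 1"
    using assms finite_C by simp
  finally have v: "l2_norm C v = 1" .
  have "op_apply C A v \<sigma> = A \<sigma> \<tau>" using finite_C assms by (simp add: op_apply_def v_def if_distrib cong: if_cong)
  then have "cmod (A \<sigma> \<tau>) \<le> l2_norm C (op_apply C A v)"
    using norm_le_l2_norm[OF finite_C assms(1), of "op_apply C A v"] by simp
  also have "\<dots> \<le> opnorm C A" by (rule opnorm_upper) (simp add: v)
  finally show ?thesis .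
qed

lemma opnorm_sum_le: "opnorm C (\<lambda>\<sigma> \<tau>. \<Sum>i\<in>I. f i \<sigma> \<tau>) \<le> (\<Sum>i\<in>I. opnorm C (f i))"
  by (rule opnorm_le_formI, unfold op_form_sum)
     (intro order_trans[OF norm_sum] sum_mono norm_op_form_le_opnorm)

lemma opnorm_add_le: "opnorm C (\<lambda>\<sigma> \<tau>. A \<sigma> \<tau> + B \<sigma> \<tau>) \<le> opnorm C A + opnorm C B"
  by (rule opnorm_le_formI, unfold op_form_add)
     (intro order_trans[OF norm_triangle_ineq] add_mono norm_op_form_le_opnorm)

lemma opnorm_diff_le: "opnorm C (\<lambda>\<sigma> \<tau>. A \<sigma> \<tau> - B \<sigma> \<tau>) \<le> opnorm C A + opnorm C B"
  by (rule opnorm_le_formI, unfold op_form_diff)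
     (intro order_trans[OF norm_triangle_ineq4] add_mono norm_op_form_le_opnorm)

lemma opnorm_scale_le: "opnorm C (\<lambda>\<sigma> \<tau>. c * A \<sigma> \<tau>) \<le> cmod c * opnorm C A"
  by (rule opnorm_le_formI, unfold op_form_scale norm_mult)
     (intro mult_left_mono norm_op_form_le_opnorm norm_ge_zero)

lemma opnorm_zero [simp]: "opnorm C (\<lambda>_ _. 0) = 0"
  by (rule antisym[OF opnorm_le_formI opnorm_nonneg]) (simp add: op_form_def)

lemma opnorm_mmult_le: "opnorm C (mmult C A B) \<le> opnorm C A * opnorm C B"
proof (rule opnorm_least)
  fix v assume v: "l2_norm C v \<le> 1"
  have "l2_norm C (op_apply C (mmult C A B) v) \<le> opnorm C A * l2_norm C (op_apply C B v)"
    unfolding op_apply_mmult by (rule l2_norm_op_apply_le)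
  also have "\<dots> \<le> opnorm C A * (opnorm C B * 1)"
    using v by (intro mult_left_mono order_trans[OF l2_norm_op_apply_le] opnorm_nonneg) auto
  finally show "l2_norm C (op_apply C (mmult C A B) v) \<le> opnorm C A * opnorm C B" by simp
qed

lemma opnorm_comm_le: "opnorm C (comm C A B) \<le> 2 * opnorm C A * opnorm C B"
proof -
  have "opnorm C (comm C A B) \<le> opnorm C (mmult C A B) + opnorm C (mmult C B A)"
    unfolding comm_def by (rule opnorm_diff_le)
  also have "\<dots> \<le> opnorm C A * opnorm C B + opnorm C B * opnorm C A"
    by (intro add_mono opnorm_mmult_le)
  finally show ?thesis by simp
qed

lemma op_form_integral:
  assumes "\<And>\<sigma> \<tau>. \<sigma> \<in> C \<Longrightarrow> \<tau> \<in> C \<Longrightarrow> (\<lambda>s. A s \<sigma> \<tau>) integrable_on S"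
  shows "(\<lambda>s. op_form C (A s) u v) integrable_on S"
    and "op_form C (\<lambda>\<sigma> \<tau>. integral S (\<lambda>s. A s \<sigma> \<tau>)) u v = integral S (\<lambda>s. op_form C (A s) u v)"
proof -
  have int: "(\<lambda>s. cnj (u \<sigma>) * A s \<sigma> \<tau> * v \<tau>) integrable_on S" if "\<sigma> \<in> C" "\<tau> \<in> C" for \<sigma> \<tau>
    using assms[OF that] by (intro integrable_on_mult_left integrable_on_mult_right)
  show "(\<lambda>s. op_form C (A s) u v) integrable_on S"
    unfolding op_form_def by (intro integrable_sum finite_C) (use int in auto)
  have "op_form C (\<lambda>\<sigma> \<tau>. integral S (\<lambda>s. A s \<sigma> \<tau>)) u v
      = (\<Sum>\<sigma>\<in>C. \<Sum>\<tau>\<in>C. integral S (\<lambda>s. cnj (u \<sigma>) * A s \<sigma> \<tau> * v \<tau>))"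
    unfolding op_form_def by (simp add: integral_mult_left integral_mult_right)
  also have "\<dots> = (\<Sum>\<sigma>\<in>C. integral S (\<lambda>s. \<Sum>\<tau>\<in>C. cnj (u \<sigma>) * A s \<sigma> \<tau> * v \<tau>))"
    by (intro sum.cong refl integral_sum[symmetric] finite_C) (use int in auto)
  also have "\<dots> = integral S (\<lambda>s. op_form C (A s) u v)"
    unfolding op_form_def by (intro integral_sum[symmetric] finite_C integrable_sum) (use int in auto)
  finally show "op_form C (\<lambda>\<sigma> \<tau>. integral S (\<lambda>s. A s \<sigma> \<tau>)) u v = integral S (\<lambda>s. op_form C (A s) u v)" .
qed

lemma opnorm_integral_le:
  assumes "\<And>\<sigma> \<tau>. \<sigma> \<in> C \<Longrightarrow> \<tau> \<in> C \<Longrightarrow> (\<lambda>s. A s \<sigma> \<tau>) integrable_on S"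
    and "(\<lambda>s. opnorm C (A s)) integrable_on S"
  shows "opnorm C (\<lambda>\<sigma> \<tau>. integral S (\<lambda>s. A s \<sigma> \<tau>)) \<le> integral S (\<lambda>s. opnorm C (A s))"
proof (rule opnorm_le_formI)
  fix u v assume uv: "l2_norm C u \<le> 1" "l2_norm C v \<le> 1"
  have "norm (integral S (\<lambda>s. op_form C (A s) u v)) \<le> integral S (\<lambda>s. opnorm C (A s))"
    by (rule integral_norm_bound_integral[OF op_form_integral(1) assms(2)])
       (use assms(1) norm_op_form_le_opnorm[OF uv] in auto)
  then show "cmod (op_form C (\<lambda>\<sigma> \<tau>. integral S (\<lambda>s. A s \<sigma> \<tau>)) u v) \<le> integral S (\<lambda>s. opnorm C (A s))"
    by (simp add: op_form_integral(2)[OF assms(1)])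
qed

lemma op_form_suminf:
  assumes "\<And>\<sigma> \<tau>. \<sigma> \<in> C \<Longrightarrow> \<tau> \<in> C \<Longrightarrow> summable (\<lambda>n. A n \<sigma> \<tau>)"
  shows "op_form C (\<lambda>\<sigma> \<tau>. \<Sum>n. A n \<sigma> \<tau>) u v = (\<Sum>n. op_form C (A n) u v)"
proof -
  have summ: "summable (\<lambda>n. cnj (u \<sigma>) * A n \<sigma> \<tau> * v \<tau>)" if "\<sigma> \<in> C" "\<tau> \<in> C" for \<sigma> \<tau>
    by (rule summable_mult2[OF summable_mult[OF assms[OF that]]])
  have "op_form C (\<lambda>\<sigma> \<tau>. \<Sum>n. A n \<sigma> \<tau>) u v = (\<Sum>\<sigma>\<in>C. \<Sum>\<tau>\<in>C. \<Sum>n. cnj (u \<sigma>) * A n \<sigma> \<tau> * v \<tau>)"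
    unfolding op_form_def
  proof (intro sum.cong refl)
    fix \<sigma> \<tau> assume st: "\<sigma> \<in> C" "\<tau> \<in> C"
    have "cnj (u \<sigma>) * (\<Sum>n. A n \<sigma> \<tau>) * v \<tau> = (\<Sum>n. cnj (u \<sigma>) * A n \<sigma> \<tau>) * v \<tau>"
      using suminf_mult[OF assms[OF st], of "cnj (u \<sigma>)"] by simp
    also have "\<dots> = (\<Sum>n. cnj (u \<sigma>) * A n \<sigma> \<tau> * v \<tau>)"
      by (rule suminf_mult2[OF summable_mult[OF assms[OF st]]])
    finally show "cnj (u \<sigma>) * (\<Sum>n. A n \<sigma> \<tau>) * v \<tau> = (\<Sum>n. cnj (u \<sigma>) * A n \<sigma> \<tau> * v \<tau>)" .
  qed
  also have "\<dots> = (\<Sum>n. \<Sum>\<sigma>\<in>C. \<Sum>\<tau>\<in>C. cnj (u \<sigma>) * A n \<sigma> \<tau> * v \<tau>)"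
    using summ by (simp add: suminf_sum summable_sum)
  finally show ?thesis unfolding op_form_def .
qed

lemma opnorm_suminf_le:
  assumes "\<And>\<sigma> \<tau>. \<sigma> \<in> C \<Longrightarrow> \<tau> \<in> C \<Longrightarrow> summable (\<lambda>n. A n \<sigma> \<tau>)"
    and "\<And>n. opnorm C (A n) \<le> b n" and "summable b"
  shows "opnorm C (\<lambda>\<sigma> \<tau>. \<Sum>n. A n \<sigma> \<tau>) \<le> (\<Sum>n. b n)"
proof (rule opnorm_le_formI)
  fix u v assume uv: "l2_norm C u \<le> 1" "l2_norm C v \<le> 1"
  have "norm (\<Sum>n. op_form C (A n) u v) \<le> (\<Sum>n. b n)"
    using norm_op_form_le_opnorm[OF uv] assms(2,3) by (intro norm_suminf_le) (auto intro: order_trans)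
  then show "cmod (op_form C (\<lambda>\<sigma> \<tau>. \<Sum>n. A n \<sigma> \<tau>) u v) \<le> (\<Sum>n. b n)"
    by (simp add: op_form_suminf[OF assms(1)])
qed

text \<open>The operator norm is a supremum over the countable set of unit vectors with coordinates
  in a countable dense subset of \<open>\<complex>\<close>, hence measurable in the entries.\<close>

lemma unit_vector_approx_dense:
  fixes D :: "complex set"
  assumes dense: "\<And>X. open X \<Longrightarrow> X \<noteq> {} \<Longrightarrow> \<exists>d\<in>D. d \<in> X"
    and v: "l2_norm C v \<le> 1" and \<eta>: "0 < \<eta>" "\<eta> \<le> 1"
  shows "\<exists>w\<in>PiE C (\<lambda>_. D). l2_norm C w \<le> 1 \<and> (\<forall>\<tau>\<in>C. cmod (w \<tau> - v \<tau>) \<le> 2 * \<eta>)"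
proof -
  define r where "r = \<eta> / (real (card C) + 1)"
  have r: "0 < r" "r \<le> \<eta>" using \<eta> by (auto simp: r_def field_simps)
  define v' where "v' \<tau> = complex_of_real (1 - \<eta>) * v \<tau>" for \<tau>
  have "\<exists>d\<in>D. cmod (d - v' \<tau>) < r" for \<tau>
    using dense[of "ball (v' \<tau>) r"] r by (auto simp: dist_norm norm_minus_commute)
  then obtain w where w: "\<And>\<tau>. w \<tau> \<in> D \<and> cmod (w \<tau> - v' \<tau>) < r" by metis
  define w' where "w' = restrict w C"
  have "w' \<in> PiE C (\<lambda>_. D)" using w by (auto simp: w'_def)
  have "l2_norm C w' = l2_norm C (\<lambda>\<tau>. v' \<tau> + (w \<tau> - v' \<tau>))"
    by (rule l2_norm_cong) (simp add: w'_def)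
  also have "\<dots> \<le> l2_norm C v' + l2_norm C (\<lambda>\<tau>. w \<tau> - v' \<tau>)" by (rule l2_norm_triangle)
  also have "l2_norm C v' = cmod (complex_of_real (1 - \<eta>)) * l2_norm C v"
    unfolding v'_def by (rule l2_norm_scale)
  also have "cmod (complex_of_real (1 - \<eta>)) = 1 - \<eta>"
    using \<eta> by (simp only: norm_of_real)
  also have "l2_norm C (\<lambda>\<tau>. w \<tau> - v' \<tau>) \<le> (\<Sum>\<tau>\<in>C. r)"
    using w by (intro order_trans[OF l2_norm_le_sum] sum_mono less_imp_le) auto
  also have "(\<Sum>\<tau>\<in>C. r) \<le> \<eta>" using \<eta> by (simp add: r_def field_simps)
  finally have "l2_norm C w' \<le> (1 - \<eta>) * l2_norm C v + \<eta>" by simp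
  also have "\<dots> \<le> 1" using \<eta> v mult_left_mono[OF v, of "1 - \<eta>"] by simp
  finally have "l2_norm C w' \<le> 1" .
  moreover have "cmod (w' \<tau> - v \<tau>) \<le> 2 * \<eta>" if "\<tau> \<in> C" for \<tau>
  proof -
    have "w' \<tau> - v \<tau> = (w \<tau> - v' \<tau>) - complex_of_real \<eta> * v \<tau>"
      using that by (simp add: w'_def v'_def algebra_simps)
    then have "cmod (w' \<tau> - v \<tau>) \<le> r + \<eta> * cmod (v \<tau>)"
      using w[of \<tau>] \<eta> norm_triangle_ineq4[of "w \<tau> - v' \<tau>" "complex_of_real \<eta> * v \<tau>"]
      by (simp add: norm_mult)
    also have "\<dots> \<le> \<eta> + \<eta> * 1"
      using r \<eta> order_trans[OF norm_le_l2_norm[OF finite_C that] v] by (intro add_mono mult_left_mono) auto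
    finally show ?thesis by simp
  qed
  ultimately show ?thesis using \<open>w' \<in> PiE C (\<lambda>_. D)\<close> by blast
qed

lemma opnorm_eq_SUP_dense:
  fixes D :: "complex set"
  assumes dense: "\<And>X. open X \<Longrightarrow> X \<noteq> {} \<Longrightarrow> \<exists>d\<in>D. d \<in> X"
  defines "V \<equiv> {w\<in>PiE C (\<lambda>_. D). l2_norm C w \<le> 1}"
  shows "opnorm C A = (SUP w\<in>V. l2_norm C (op_apply C A w))"
proof (rule antisym)
  have bdd: "bdd_above ((\<lambda>w. l2_norm C (op_apply C A w)) ` V)"
    by (rule bdd_aboveI[of _ "opnorm C A"]) (auto simp: V_def intro: opnorm_upper)
  show "opnorm C A \<le> (SUP w\<in>V. l2_norm C (op_apply C A w))"
  proof (rule opnorm_least, rule field_le_epsilon)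
    fix v :: "'s config \<Rightarrow> complex" and \<epsilon> :: real
    assume v: "l2_norm C v \<le> 1" and \<epsilon>: "0 < \<epsilon>"
    define F where "F = entry_norm_sum C A"
    have F: "0 \<le> F" by (simp add: F_def entry_norm_sum_def sum_nonneg)
    define \<eta> where "\<eta> = min 1 (\<epsilon> / (2 * F + 1))"
    have \<eta>: "0 < \<eta>" "\<eta> \<le> 1" "2 * F * \<eta> \<le> \<epsilon>"
      using \<epsilon> F by (auto simp: \<eta>_def min_def field_simps)
    obtain w where w: "w \<in> V" "\<forall>\<tau>\<in>C. cmod (v \<tau> - w \<tau>) \<le> 2 * \<eta>"
      using unit_vector_approx_dense[OF dense v \<eta>(1,2)] by (auto simp: V_def norm_minus_commute)
    have "l2_norm C (op_apply C A v) = l2_norm C (\<lambda>\<sigma>. op_apply C A w \<sigma> + op_apply C A (\<lambda>\<tau>. v \<tau> - w \<tau>) \<sigma>)"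
      by (simp flip: op_apply_add)
    also have "\<dots> \<le> l2_norm C (op_apply C A w) + l2_norm C (op_apply C A (\<lambda>\<tau>. v \<tau> - w \<tau>))"
      by (rule l2_norm_triangle)
    also have "l2_norm C (op_apply C A (\<lambda>\<tau>. v \<tau> - w \<tau>)) \<le> F * (2 * \<eta>)"
      unfolding F_def using w(2) by (intro l2_norm_op_apply_le_entry_norm_sum) auto
    also have "l2_norm C (op_apply C A w) \<le> (SUP w\<in>V. l2_norm C (op_apply C A w))"
      using w(1) by (rule cSUP_upper[OF _ bdd])
    finally show "l2_norm C (op_apply C A v) \<le> (SUP w\<in>V. l2_norm C (op_apply C A w)) + \<epsilon>"
      using \<eta>(3) by simp
  qed
  have "V \<noteq> {}"
    using unit_vector_approx_dense[OF dense, of "\<lambda>_. 0" 1] by (auto simp: V_def)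
  then show "(SUP w\<in>V. l2_norm C (op_apply C A w)) \<le> opnorm C A"
    by (intro cSUP_least) (auto simp: V_def intro: opnorm_upper)
qed

lemma borel_measurable_opnorm:
  assumes "\<And>\<sigma> \<tau>. \<sigma> \<in> C \<Longrightarrow> \<tau> \<in> C \<Longrightarrow> (\<lambda>s. A s \<sigma> \<tau>) \<in> borel_measurable M"
  shows "(\<lambda>s. opnorm C (A s)) \<in> borel_measurable M"
proof -
  obtain D :: "complex set" where D: "countable D" "\<And>X. open X \<Longrightarrow> X \<noteq> {} \<Longrightarrow> \<exists>d\<in>D. d \<in> X"
    by (rule countable_dense_setE) blast
  define V where "V = {w\<in>PiE C (\<lambda>_. D). l2_norm C w \<le> 1}"
  have "countable V"
    unfolding V_def by (rule countable_subset[OF _ countable_PiE[OF finite_C]]) (use D in auto)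
  then have "(\<lambda>s. SUP w\<in>V. l2_norm C (op_apply C (A s) w)) \<in> borel_measurable M"
  proof (rule borel_measurable_cSUP)
    show "(\<lambda>s. l2_norm C (op_apply C (A s) w)) \<in> borel_measurable M" for w
      unfolding l2_norm_def op_apply_def L2_set_def using assms by measurable
    show "bdd_above ((\<lambda>w. l2_norm C (op_apply C (A s) w)) ` V)" for s
      by (rule bdd_aboveI[of _ "opnorm C (A s)"]) (auto simp: V_def intro: opnorm_upper)
  qed
  then show ?thesis
    using opnorm_eq_SUP_dense[OF D(2)] by (simp add: V_def)
qed

end

section \<open>Potentials and the commutator estimate\<close>

lemma exp_one_mult_le_exp: "exp 1 * x \<le> exp (x::real)"
proof -
  have "exp 1 * x \<le> exp 1 * exp (x - 1)"
    using exp_ge_add_one_self[of "x - 1"] by (intro mult_left_mono) auto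
  then show ?thesis by (simp add: exp_diff)
qed

lemma mult_exp_le_exp_div:
  fixes k1 k2 n :: real
  assumes "k2 < k1" "0 \<le> n"
  shows "n * exp (k2 * n) \<le> exp (k1 * n) / (exp 1 * (k1 - k2))"
proof -
  have "exp 1 * ((k1 - k2) * n) * exp (k2 * n) \<le> exp ((k1 - k2) * n) * exp (k2 * n)"
    by (intro mult_right_mono exp_one_mult_le_exp) auto
  also have "\<dots> = exp (k1 * n)" by (simp add: exp_add[symmetric] algebra_simps)
  finally show ?thesis using assms by (simp add: field_simps)
qed

locale spin_system =
  fixes \<Lambda> :: "'s set" and d :: "'s \<Rightarrow> nat"
  assumes finite_\<Lambda>: "finite \<Lambda>"
begin

abbreviation \<C> :: "'s config set" where "\<C> \<equiv> configs \<Lambda> d"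

lemma finite_configs: "finite \<C>"
  unfolding configs_def by (rule finite_PiE[OF finite_\<Lambda>]) auto

definition sets_at :: "'s \<Rightarrow> 's set set" where
  "sets_at x = {Z. Z \<subseteq> \<Lambda> \<and> x \<in> Z}"

lemma finite_sets_at: "finite (sets_at x)"
  unfolding sets_at_def by (rule finite_subset[of _ "Pow \<Lambda>"]) (auto simp: finite_\<Lambda>)

definition site_weight :: "real \<Rightarrow> 's pot \<Rightarrow> 's \<Rightarrow> real" where
  "site_weight \<kappa> Q x = (\<Sum>Z\<in>sets_at x. exp (\<kappa> * real (card Z)) * opnorm \<C> (Q Z))"

lemma pot_norm_eq_Max: "pot_norm \<Lambda> d \<kappa> Q = Max (insert 0 (site_weight \<kappa> Q ` \<Lambda>))"
  unfolding pot_norm_def site_weight_def sets_at_def by simp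

lemma site_weight_nonneg: "0 \<le> site_weight \<kappa> Q x"
  unfolding site_weight_def by (intro sum_nonneg mult_nonneg_nonneg opnorm_nonneg[OF finite_configs]) auto

lemma site_weight_le_pot_norm: "x \<in> \<Lambda> \<Longrightarrow> site_weight \<kappa> Q x \<le> pot_norm \<Lambda> d \<kappa> Q"
  unfolding pot_norm_eq_Max by (rule Max_ge) (auto simp: finite_\<Lambda>)

lemma pot_norm_nonneg: "0 \<le> pot_norm \<Lambda> d \<kappa> Q"
  unfolding pot_norm_eq_Max by (rule Max_ge) (auto simp: finite_\<Lambda>)

lemma pot_norm_leI:
  "0 \<le> M \<Longrightarrow> (\<And>x. x \<in> \<Lambda> \<Longrightarrow> site_weight \<kappa> Q x \<le> M) \<Longrightarrow> pot_norm \<Lambda> d \<kappa> Q \<le> M"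
  unfolding pot_norm_eq_Max by (subst Max_le_iff) (auto simp: finite_\<Lambda>)

lemma site_weight_mono: "k1 \<le> k2 \<Longrightarrow> site_weight k1 Q x \<le> site_weight k2 Q x"
  unfolding site_weight_def
  by (intro sum_mono mult_right_mono opnorm_nonneg[OF finite_configs]) (auto intro: mult_right_mono)

lemma pot_norm_mono: "k1 \<le> k2 \<Longrightarrow> pot_norm \<Lambda> d k1 Q \<le> pot_norm \<Lambda> d k2 Q"
  by (rule pot_norm_leI[OF pot_norm_nonneg]) (meson order_trans site_weight_mono site_weight_le_pot_norm)

lemma opnorm_le_pot_norm:
  assumes "Z \<subseteq> \<Lambda>" "x \<in> Z" "0 \<le> \<kappa>"
  shows "opnorm \<C> (Q Z) \<le> pot_norm \<Lambda> d \<kappa> Q"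
proof -
  have "opnorm \<C> (Q Z) \<le> exp (\<kappa> * real (card Z)) * opnorm \<C> (Q Z)"
    using assms opnorm_nonneg[OF finite_configs, of "Q Z"] by (intro mult_le_cancel_right1[THEN iffD2]) auto
  also have "\<dots> \<le> site_weight \<kappa> Q x"
    unfolding site_weight_def using assms
    by (intro member_le_sum mult_nonneg_nonneg opnorm_nonneg[OF finite_configs] finite_sets_at)
       (auto simp: sets_at_def)
  also have "\<dots> \<le> pot_norm \<Lambda> d \<kappa> Q" using assms by (intro site_weight_le_pot_norm) auto
  finally show ?thesis .
qed

lemma pot_norm_cong:
  assumes "\<And>Z \<sigma> \<tau>. Z \<subseteq> \<Lambda> \<Longrightarrow> \<sigma> \<in> \<C> \<Longrightarrow> \<tau> \<in> \<C> \<Longrightarrow> P Z \<sigma> \<tau> = Q Z \<sigma> \<tau>"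
  shows "pot_norm \<Lambda> d \<kappa> P = pot_norm \<Lambda> d \<kappa> Q"
proof -
  have "site_weight \<kappa> P = site_weight \<kappa> Q"
    unfolding site_weight_def sets_at_def using assms
    by (intro ext sum.cong refl arg_cong2[where f="(*)"] opnorm_cong) auto
  then show ?thesis unfolding pot_norm_eq_Max by simp
qed

lemma pot_norm_zero [simp]: "pot_norm \<Lambda> d \<kappa> (\<lambda>Z \<sigma> \<tau>. 0) = 0"
  by (intro antisym pot_norm_leI pot_norm_nonneg)
     (simp_all add: site_weight_def opnorm_zero[OF finite_configs])

lemma pot_norm_add_le:
  "pot_norm \<Lambda> d \<kappa> (\<lambda>Z \<sigma> \<tau>. P Z \<sigma> \<tau> + Q Z \<sigma> \<tau>) \<le> pot_norm \<Lambda> d \<kappa> P + pot_norm \<Lambda> d \<kappa> Q"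
proof (rule pot_norm_leI)
  show "0 \<le> pot_norm \<Lambda> d \<kappa> P + pot_norm \<Lambda> d \<kappa> Q" by (simp add: add_nonneg_nonneg pot_norm_nonneg)
  fix x assume x: "x \<in> \<Lambda>"
  have "site_weight \<kappa> (\<lambda>Z \<sigma> \<tau>. P Z \<sigma> \<tau> + Q Z \<sigma> \<tau>) x \<le> site_weight \<kappa> P x + site_weight \<kappa> Q x"
    unfolding site_weight_def sum.distrib[symmetric] distrib_left[symmetric]
    by (intro sum_mono mult_left_mono opnorm_add_le[OF finite_configs]) auto
  also have "\<dots> \<le> pot_norm \<Lambda> d \<kappa> P + pot_norm \<Lambda> d \<kappa> Q"
    by (intro add_mono site_weight_le_pot_norm x)
  finally show "site_weight \<kappa> (\<lambda>Z \<sigma> \<tau>. P Z \<sigma> \<tau> + Q Z \<sigma> \<tau>) x \<le> pot_norm \<Lambda> d \<kappa> P + pot_norm \<Lambda> d \<kappa> Q" .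
qed

definition commutator_pairs :: "'s set \<Rightarrow> ('s set \<times> 's set) set" where
  "commutator_pairs Z = {(Z1, Z2). Z1 \<subseteq> \<Lambda> \<and> Z2 \<subseteq> \<Lambda> \<and> Z1 \<inter> Z2 \<noteq> {} \<and> Z1 \<union> Z2 = Z}"

lemma finite_commutator_pairs: "finite (commutator_pairs Z)"
  unfolding commutator_pairs_def
  by (rule finite_subset[of _ "Pow \<Lambda> \<times> Pow \<Lambda>"]) (auto simp: finite_\<Lambda>)

lemma ad_pot_eq:
  "ad_pot \<Lambda> d P Q Z = (\<lambda>\<sigma> \<tau>. \<Sum>p\<in>commutator_pairs Z. comm \<C> (P (fst p)) (Q (snd p)) \<sigma> \<tau>)"
  unfolding ad_pot_def commutator_pairs_def by (simp add: split_beta)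

lemma ad_pot_expand: "ad_pot \<Lambda> d P Q Z \<sigma> \<tau> =
   (\<Sum>p\<in>commutator_pairs Z. \<Sum>\<rho>\<in>\<C>. P (fst p) \<sigma> \<rho> * Q (snd p) \<rho> \<tau> - Q (snd p) \<sigma> \<rho> * P (fst p) \<rho> \<tau>)"
  by (simp add: ad_pot_eq comm_def mmult_def sum_subtractf)

lemma opnorm_ad_pot_le: "opnorm \<C> (ad_pot \<Lambda> d P Q Z)
   \<le> (\<Sum>p\<in>commutator_pairs Z. 2 * opnorm \<C> (P (fst p)) * opnorm \<C> (Q (snd p)))"
  unfolding ad_pot_eq
  by (rule order_trans[OF opnorm_sum_le[OF finite_configs]])
     (intro sum_mono opnorm_comm_le[OF finite_configs])

definition overlap_pairs_at :: "'s \<Rightarrow> ('s set \<times> 's set) set" where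
  "overlap_pairs_at x = {(Z1, Z2). Z1 \<subseteq> \<Lambda> \<and> Z2 \<subseteq> \<Lambda> \<and> Z1 \<inter> Z2 \<noteq> {} \<and> x \<in> Z1}"

lemma finite_overlap_pairs_at: "finite (overlap_pairs_at x)"
  unfolding overlap_pairs_at_def
  by (rule finite_subset[of _ "Pow \<Lambda> \<times> Pow \<Lambda>"]) (auto simp: finite_\<Lambda>)

text \<open>Each \<open>Z\<^sub>2\<close> meeting \<open>Z\<^sub>1\<close> is counted at one of the sites of \<open>Z\<^sub>1\<close>; this is where the
  factor \<open>|Z\<^sub>1|\<close> comes from.\<close>
lemma overlap_pair_sum_le:
  fixes f g :: "'s set \<Rightarrow> real" and x :: 's
  assumes f: "\<And>Z. 0 \<le> f Z" and g: "\<And>Z. 0 \<le> g Z"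
    and G: "\<And>y. y \<in> \<Lambda> \<Longrightarrow> (\<Sum>Z\<in>sets_at y. g Z) \<le> G"
  shows "(\<Sum>p\<in>overlap_pairs_at x. f (fst p) * g (snd p)) \<le> (\<Sum>Z\<in>sets_at x. f Z * real (card Z) * G)"
proof -
  define W where "W Z1 = {Z2. Z2 \<subseteq> \<Lambda> \<and> Z1 \<inter> Z2 \<noteq> {}}" for Z1
  have finite_W: "finite (W Z1)" for Z1
    unfolding W_def by (rule finite_subset[of _ "Pow \<Lambda>"]) (auto simp: finite_\<Lambda>)
  have "(\<Sum>p\<in>overlap_pairs_at x. f (fst p) * g (snd p)) = (\<Sum>(Z1, Z2)\<in>Sigma (sets_at x) W. f Z1 * g Z2)"
    by (rule sum.cong) (auto simp: overlap_pairs_at_def sets_at_def W_def)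
  also have "\<dots> = (\<Sum>Z1\<in>sets_at x. f Z1 * (\<Sum>Z2\<in>W Z1. g Z2))"
    by (simp add: sum.Sigma[symmetric] finite_sets_at finite_W sum_distrib_left)
  also have "\<dots> \<le> (\<Sum>Z1\<in>sets_at x. f Z1 * (real (card Z1) * G))"
  proof (intro sum_mono mult_left_mono f)
    fix Z1 assume Z1: "Z1 \<in> sets_at x"
    then have finite_Z1: "finite Z1" using finite_\<Lambda> by (auto simp: sets_at_def intro: finite_subset)
    have "(\<Sum>Z2\<in>W Z1. g Z2) \<le> (\<Sum>Z2\<in>W Z1. \<Sum>y\<in>{y\<in>Z1. y \<in> Z2}. g Z2)"
    proof (rule sum_mono)
      fix Z2 assume "Z2 \<in> W Z1"
      then have "1 \<le> card {y\<in>Z1. y \<in> Z2}"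
        using finite_Z1 by (auto simp: W_def Suc_le_eq card_gt_0_iff)
      then show "g Z2 \<le> (\<Sum>y\<in>{y\<in>Z1. y \<in> Z2}. g Z2)"
        using mult_right_mono[OF _ g[of Z2], of 1] by simp
    qed
    also have "\<dots> = (\<Sum>y\<in>Z1. \<Sum>Z2\<in>sets_at y. g Z2)"
      by (subst sum.swap_restrict[OF finite_W finite_Z1])
         (intro sum.cong refl arg_cong2[where f=sum], use Z1 in \<open>auto simp: W_def sets_at_def\<close>)
    also have "\<dots> \<le> (\<Sum>y\<in>Z1. G)" using Z1 by (intro sum_mono G) (auto simp: sets_at_def)
    finally show "(\<Sum>Z2\<in>W Z1. g Z2) \<le> real (card Z1) * G" by simp
  qed
  finally show ?thesis by (simp add: mult.assoc)
qed

lemma site_weight_ad_pot_le: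
  fixes P Q :: "'s pot" and k :: real
  defines "fP Z \<equiv> exp (k * real (card Z)) * opnorm \<C> (P Z)"
    and "fQ Z \<equiv> exp (k * real (card Z)) * opnorm \<C> (Q Z)"
  assumes k: "0 \<le> k"
  shows "site_weight k (ad_pot \<Lambda> d P Q) x
    \<le> 2 * (\<Sum>p\<in>overlap_pairs_at x. fP (fst p) * fQ (snd p))
      + 2 * (\<Sum>p\<in>overlap_pairs_at x. fQ (fst p) * fP (snd p))"
proof -
  define F where "F p = 2 * exp (k * real (card (fst p \<union> snd p))) * opnorm \<C> (P (fst p)) * opnorm \<C> (Q (snd p))"
    for p :: "'s set \<times> 's set"
  have F0: "0 \<le> F p" for p by (simp add: F_def opnorm_nonneg[OF finite_configs])
  have F_le: "F p \<le> 2 * (fP (fst p) * fQ (snd p))" for p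
  proof -
    have "exp (k * real (card (fst p \<union> snd p))) \<le> exp (k * real (card (fst p))) * exp (k * real (card (snd p)))"
      using k card_Un_le[of "fst p" "snd p"] by (simp add: exp_add[symmetric] mult_left_mono flip: distrib_left)
    then have "exp (k * real (card (fst p \<union> snd p))) * (opnorm \<C> (P (fst p)) * opnorm \<C> (Q (snd p)))
        \<le> exp (k * real (card (fst p))) * exp (k * real (card (snd p))) * (opnorm \<C> (P (fst p)) * opnorm \<C> (Q (snd p)))"
      by (rule mult_right_mono) (simp add: opnorm_nonneg[OF finite_configs])
    then show ?thesis unfolding F_def fP_def fQ_def by (simp add: mult_ac)
  qed
  define Px where "Px = {(Z1, Z2). Z1 \<subseteq> \<Lambda> \<and> Z2 \<subseteq> \<Lambda> \<and> Z1 \<inter> Z2 \<noteq> {} \<and> x \<in> Z2}"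
  have finite_Px: "finite Px" unfolding Px_def
    by (rule finite_subset[of _ "Pow \<Lambda> \<times> Pow \<Lambda>"]) (auto simp: finite_\<Lambda>)
  have "site_weight k (ad_pot \<Lambda> d P Q) x \<le> (\<Sum>Z\<in>sets_at x. exp (k * real (card Z)) *
      (\<Sum>p\<in>commutator_pairs Z. 2 * opnorm \<C> (P (fst p)) * opnorm \<C> (Q (snd p))))"
    unfolding site_weight_def by (intro sum_mono mult_left_mono opnorm_ad_pot_le) auto
  also have "\<dots> = (\<Sum>Z\<in>sets_at x. \<Sum>p\<in>commutator_pairs Z. F p)"
    unfolding sum_distrib_left
    by (intro sum.cong refl) (auto simp: F_def commutator_pairs_def)
  also have "\<dots> = (\<Sum>p\<in>overlap_pairs_at x \<union> Px. F p)"
    by (simp add: sum.Sigma finite_sets_at finite_commutator_pairs,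
        rule sum.reindex_bij_witness[where j=snd and i="\<lambda>p. (fst p \<union> snd p, p)"])
       (auto simp: sets_at_def commutator_pairs_def overlap_pairs_at_def Px_def)
  also have "\<dots> \<le> (\<Sum>p\<in>overlap_pairs_at x. F p) + (\<Sum>p\<in>Px. F p)"
    using sum_Un[OF finite_overlap_pairs_at finite_Px, of F] sum_nonneg[of _ F] F0 by simp
  also have "(\<Sum>p\<in>Px. F p) \<le> (\<Sum>p\<in>Px. 2 * (fP (fst p) * fQ (snd p)))"
    by (intro sum_mono F_le)
  also have "\<dots> = (\<Sum>p\<in>overlap_pairs_at x. 2 * (fQ (fst p) * fP (snd p)))"
    by (rule sum.reindex_bij_witness[where j="\<lambda>(a, b). (b, a)" and i="\<lambda>(a, b). (b, a)"])
       (auto simp: Px_def overlap_pairs_at_def)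
  also have "(\<Sum>p\<in>overlap_pairs_at x. F p) \<le> (\<Sum>p\<in>overlap_pairs_at x. 2 * (fP (fst p) * fQ (snd p)))"
    by (intro sum_mono F_le)
  finally show ?thesis by (simp add: sum_distrib_left)
qed

lemma card_weighted_site_weight_le:
  assumes "k2 < k1"
  shows "(\<Sum>Z\<in>sets_at x. exp (k2 * real (card Z)) * opnorm \<C> (P Z) * real (card Z))
    \<le> site_weight k1 P x / (exp 1 * (k1 - k2))"
  unfolding site_weight_def sum_divide_distrib
proof (rule sum_mono)
  fix Z
  have "real (card Z) * exp (k2 * real (card Z)) * opnorm \<C> (P Z)
      \<le> exp (k1 * real (card Z)) / (exp 1 * (k1 - k2)) * opnorm \<C> (P Z)"
    using assms by (intro mult_right_mono mult_exp_le_exp_div opnorm_nonneg[OF finite_configs]) auto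
  then show "exp (k2 * real (card Z)) * opnorm \<C> (P Z) * real (card Z)
      \<le> exp (k1 * real (card Z)) * opnorm \<C> (P Z) / (exp 1 * (k1 - k2))"
    by (simp add: mult_ac)
qed

text \<open>The loss \<open>|Z|\<close> from the size of the overlap region is absorbed by lowering the decay rate
  from \<open>k\<^sub>1\<close> to \<open>k\<^sub>2\<close>.\<close>
lemma pot_norm_ad_pot_le:
  assumes k: "0 \<le> k2" "k2 < k1"
  shows "pot_norm \<Lambda> d k2 (ad_pot \<Lambda> d P Q)
     \<le> 4 / (exp 1 * (k1 - k2)) * pot_norm \<Lambda> d k1 P * pot_norm \<Lambda> d k1 Q"
proof (rule pot_norm_leI)
  define c where "c = 1 / (exp 1 * (k1 - k2))"
  have c: "0 \<le> c" using k by (simp add: c_def)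
  define fP where "fP Z = exp (k2 * real (card Z)) * opnorm \<C> (P Z)" for Z
  define fQ where "fQ Z = exp (k2 * real (card Z)) * opnorm \<C> (Q Z)" for Z
  have f0: "0 \<le> fP Z" "0 \<le> fQ Z" for Z by (simp_all add: fP_def fQ_def opnorm_nonneg[OF finite_configs])
  have sum_le: "(\<Sum>Z\<in>sets_at y. f Z) \<le> pot_norm \<Lambda> d k1 R"
    if "y \<in> \<Lambda>" "f = (\<lambda>Z. exp (k2 * real (card Z)) * opnorm \<C> (R Z))" for y f R
    using that k site_weight_mono[of k2 k1 R y] site_weight_le_pot_norm[of y k1 R]
    by (simp add: site_weight_def)
  have card_sum_le: "(\<Sum>Z\<in>sets_at x. f Z * real (card Z) * pot_norm \<Lambda> d k1 R')
      \<le> c * pot_norm \<Lambda> d k1 R * pot_norm \<Lambda> d k1 R'"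
    if "x \<in> \<Lambda>" "f = (\<lambda>Z. exp (k2 * real (card Z)) * opnorm \<C> (R Z))" for x f R R'
  proof -
    have "(\<Sum>Z\<in>sets_at x. f Z * real (card Z) * pot_norm \<Lambda> d k1 R')
        = (\<Sum>Z\<in>sets_at x. f Z * real (card Z)) * pot_norm \<Lambda> d k1 R'"
      by (simp add: sum_distrib_right)
    also have "\<dots> \<le> c * site_weight k1 R x * pot_norm \<Lambda> d k1 R'"
      using card_weighted_site_weight_le[OF k(2), where x=x and P=R]
      by (intro mult_right_mono pot_norm_nonneg) (simp_all add: that(2) c_def)
    also have "\<dots> \<le> c * pot_norm \<Lambda> d k1 R * pot_norm \<Lambda> d k1 R'"
      using that(1) c by (intro mult_right_mono mult_left_mono site_weight_le_pot_norm pot_norm_nonneg)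
    finally show ?thesis .
  qed
  fix x assume x: "x \<in> \<Lambda>"
  have "site_weight k2 (ad_pot \<Lambda> d P Q) x
    \<le> 2 * (\<Sum>p\<in>overlap_pairs_at x. fP (fst p) * fQ (snd p))
      + 2 * (\<Sum>p\<in>overlap_pairs_at x. fQ (fst p) * fP (snd p))"
    unfolding fP_def fQ_def by (rule site_weight_ad_pot_le[OF k(1)])
  also have "\<dots> \<le> 2 * (c * pot_norm \<Lambda> d k1 P * pot_norm \<Lambda> d k1 Q)
      + 2 * (c * pot_norm \<Lambda> d k1 Q * pot_norm \<Lambda> d k1 P)"
    using x f0
    by (intro add_mono mult_left_mono order_trans[OF overlap_pair_sum_le card_sum_le] sum_le)
       (auto simp: fP_def fQ_def)
  finally show "site_weight k2 (ad_pot \<Lambda> d P Q) x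
      \<le> 4 / (exp 1 * (k1 - k2)) * pot_norm \<Lambda> d k1 P * pot_norm \<Lambda> d k1 Q"
    by (simp add: c_def)
qed (use k in \<open>simp add: pot_norm_nonneg\<close>)

end

section \<open>Bounded measurable functions on an interval\<close>

lemma bounded_const_comp: "bounded ((\<lambda>_. c) ` S)"
  by (rule bounded_subset[of "{c}"]) auto

lemma bounded_mult_comp:
  fixes f g :: "'a \<Rightarrow> 'b::real_normed_algebra"
  assumes "bounded (f ` S)" "bounded (g ` S)"
  shows "bounded ((\<lambda>x. f x * g x) ` S)"
proof -
  obtain A B where "\<forall>x\<in>S. norm (f x) \<le> A" "\<forall>x\<in>S. norm (g x) \<le> B"
    using assms by (auto simp: bounded_iff)
  then have "\<forall>x\<in>S. norm (f x * g x) \<le> A * B"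
    by (meson norm_ge_zero norm_mult_ineq order_trans mult_mono)
  then show ?thesis by (auto simp: bounded_iff)
qed

lemma bounded_sum_comp:
  fixes f :: "'i \<Rightarrow> 'a \<Rightarrow> 'b::real_normed_vector"
  shows "finite I \<Longrightarrow> (\<And>i. i \<in> I \<Longrightarrow> bounded (f i ` S)) \<Longrightarrow> bounded ((\<lambda>x. \<Sum>i\<in>I. f i x) ` S)"
  by (induction I rule: finite_induct)
     (auto intro: bounded_plus_comp bounded_const_comp)

lemma bounded_power_comp:
  fixes f :: "'a \<Rightarrow> 'b::real_normed_algebra_1"
  shows "bounded (f ` S) \<Longrightarrow> bounded ((\<lambda>x. f x ^ n) ` S)"
  by (induction n) (auto intro: bounded_mult_comp bounded_const_comp)

lemma borel_measurable_lebesgue_on_if_lborel: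
  fixes f :: "real \<Rightarrow> 'b::topological_space"
  shows "f \<in> borel_measurable (restrict_space lborel S) \<Longrightarrow> S \<in> sets lborel
    \<Longrightarrow> f \<in> borel_measurable (lebesgue_on S)"
  by (metis borel_measurable_subalgebra mono_restrict_space sets_completionI_sets
      space_restrict_space2 subsetI)

context
  fixes f :: "real \<Rightarrow> 'a::euclidean_space" and t :: real
  assumes measurable: "f \<in> borel_measurable (lebesgue_on {0..t})"
    and bounded: "bounded (f ` {0..t})"
begin

lemma bounded_measurable_absolutely_integrable: "u \<le> t \<Longrightarrow> f absolutely_integrable_on {0..u}"
proof -
  obtain B where "\<forall>s\<in>{0..t}. norm (f s) \<le> B" using bounded by (auto simp: bounded_iff)
  then have "f absolutely_integrable_on {0..t}"
    by (intro measurable_bounded_by_integrable_imp_absolutely_integrable[OF measurable, of "\<lambda>_. B"]) auto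
  then show "u \<le> t \<Longrightarrow> f absolutely_integrable_on {0..u}"
    by (cases "0 \<le> u") (auto intro: absolutely_integrable_on_subinterval)
qed

lemma bounded_measurable_integrable: "u \<le> t \<Longrightarrow> f integrable_on {0..u}"
  using bounded_measurable_absolutely_integrable by (simp add: absolutely_integrable_on_def)

lemma borel_measurable_indefinite_integral:
  "(\<lambda>u. integral {0..u} f) \<in> borel_measurable (lebesgue_on {0..t})"
  by (intro continuous_imp_measurable_on_sets_lebesgue indefinite_integral_continuous_1
      bounded_measurable_integrable) auto

lemma bounded_indefinite_integral: "bounded ((\<lambda>u. integral {0..u} f) ` {0..t})"
proof -
  obtain B where B: "\<forall>s\<in>{0..t}. norm (f s) \<le> B" using bounded by (auto simp: bounded_iff)
  have "norm (integral {0..u} f) \<le> \<bar>B\<bar> * \<bar>t\<bar>" if u: "u \<in> {0..t}" for u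
  proof -
    have "norm (integral {0..u} f) \<le> integral {0..u} (\<lambda>_. B)"
      using u B bounded_measurable_integrable[of u] by (intro integral_norm_bound_integral) auto
    also have "\<dots> = B * u" using u by simp
    also have "\<dots> \<le> \<bar>B\<bar> * \<bar>t\<bar>" using u by (intro mult_mono) auto
    finally show ?thesis .
  qed
  then show ?thesis by (intro bounded_iff[THEN iffD2] exI[of _ "\<bar>B\<bar> * \<bar>t\<bar>"]) auto
qed

end

lemma integrable_mult_indefinite_integral_power:
  fixes f w :: "real \<Rightarrow> real"
  assumes "f \<in> borel_measurable (lebesgue_on {0..t})" "bounded (f ` {0..t})"
    and "w \<in> borel_measurable (lebesgue_on {0..t})" "bounded (w ` {0..t})" and "u \<le> t"
  shows "(\<lambda>s. f s * integral {0..s} w ^ k) integrable_on {0..u}"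
  using assms borel_measurable_indefinite_integral[OF assms(3,4)]
    bounded_indefinite_integral[OF assms(3,4)]
  by (intro bounded_measurable_integrable[of _ t])
     (measurable, auto intro: bounded_mult_comp bounded_power_comp)

lemma power_diff_ge:
  fixes a b :: real
  assumes "0 \<le> a" "a \<le> b"
  shows "real (Suc j) * ((b - a) * a ^ j) \<le> b ^ Suc j - a ^ Suc j"
proof -
  have "(\<Sum>i<Suc j. a ^ j) \<le> (\<Sum>i<Suc j. a ^ (Suc j - Suc i) * b ^ i)"
  proof (rule sum_mono)
    fix i assume "i \<in> {..<Suc j}"
    then have "a ^ j = a ^ (Suc j - Suc i) * a ^ i" by (simp flip: power_add)
    also have "\<dots> \<le> a ^ (Suc j - Suc i) * b ^ i" using assms by (intro mult_left_mono power_mono) auto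
    finally show "a ^ j \<le> a ^ (Suc j - Suc i) * b ^ i" .
  qed
  then have "(b - a) * (\<Sum>i<Suc j. a ^ j) \<le> (b - a) * (\<Sum>i<Suc j. a ^ (Suc j - Suc i) * b ^ i)"
    using assms by (intro mult_left_mono) auto
  also have "\<dots> = b ^ Suc j - a ^ Suc j"
    by (rule power_diff_sumr2[symmetric])
  finally show ?thesis by (simp add: algebra_simps)
qed

text \<open>One step of a Riemann-sum comparison of \<open>\<integral> w W\<^sup>j\<close> with \<open>W\<^sup>j\<^sup>+\<^sup>1/(j+1)\<close>, where \<open>W\<close> is the
  indefinite integral of \<open>w\<close>: over a grid with increments of \<open>W\<close> at most \<open>\<omega>\<close> the errors
  \<open>\<omega> (b\<^sup>j - a\<^sup>j)\<close> telescope to \<open>\<omega> W\<^sup>j\<close>, which vanishes as the grid is refined.\<close>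
lemma power_increment_le:
  fixes a b \<omega> :: real
  assumes "0 \<le> a" "a \<le> b" "b - a \<le> \<omega>"
    and "I \<le> a ^ Suc j / real (Suc j) + \<omega> * a ^ j" and "p \<le> (b - a) * b ^ j"
  shows "I + p \<le> b ^ Suc j / real (Suc j) + \<omega> * b ^ j"
proof -
  have "(b - a) * a ^ j \<le> (b ^ Suc j - a ^ Suc j) / real (Suc j)"
    using power_diff_ge[OF assms(1,2), of j] by (simp add: field_simps)
  moreover have "(b - a) * (b ^ j - a ^ j) \<le> \<omega> * (b ^ j - a ^ j)"
    using assms by (intro mult_right_mono) (auto intro: power_mono)
  ultimately have "p \<le> (b ^ Suc j - a ^ Suc j) / real (Suc j) + \<omega> * (b ^ j - a ^ j)"
    using assms(5) by (simp add: algebra_simps)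
  with assms(4) show ?thesis by (simp add: diff_divide_distrib algebra_simps)
qed

context
  fixes w :: "real \<Rightarrow> real" and t K :: real
  assumes w_integrable: "w integrable_on {0..t}"
    and w_nonneg: "\<And>s. s \<in> {0..t} \<Longrightarrow> 0 \<le> w s"
    and w_le: "\<And>s. s \<in> {0..t} \<Longrightarrow> w s \<le> K"
begin

lemma indefinite_integral_diff:
  "0 \<le> a \<Longrightarrow> a \<le> b \<Longrightarrow> b \<le> t \<Longrightarrow> integral {0..b} w - integral {0..a} w = integral {a..b} w"
  using Henstock_Kurzweil_Integration.integral_combine[where a=0 and c=a and b=b and f=w]
    integrable_on_subinterval[OF w_integrable, of 0 b] by simp

lemma indefinite_integral_mono:
  "0 \<le> a \<Longrightarrow> a \<le> b \<Longrightarrow> b \<le> t \<Longrightarrow> integral {0..a} w \<le> integral {0..b} w"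
  using w_nonneg by (intro integral_subset_le integrable_on_subinterval[OF w_integrable]) auto

lemma indefinite_integral_nonneg: "0 \<le> a \<Longrightarrow> a \<le> t \<Longrightarrow> 0 \<le> integral {0..a} w"
  using w_nonneg by (intro integral_nonneg integrable_on_subinterval[OF w_integrable]) auto

lemma indefinite_integral_increment_le:
  assumes "0 \<le> a" "a \<le> b" "b \<le> t"
  shows "integral {0..b} w - integral {0..a} w \<le> K * (b - a)"
proof -
  have "integral {a..b} w \<le> integral {a..b} (\<lambda>_. K)"
    using assms w_le by (intro integral_le integrable_on_subinterval[OF w_integrable]) auto
  then show ?thesis using indefinite_integral_diff[OF assms] assms by (simp add: mult.commute)
qed

lemma integral_mult_indefinite_integral_power_piece:
  assumes f: "(\<lambda>s. w s * integral {0..s} w ^ j) integrable_on {0..t}"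
    and ab: "0 \<le> a" "a \<le> b" "b \<le> t"
  shows "integral {a..b} (\<lambda>s. w s * integral {0..s} w ^ j)
    \<le> (integral {0..b} w - integral {0..a} w) * integral {0..b} w ^ j"
proof -
  have "integral {a..b} (\<lambda>s. w s * integral {0..s} w ^ j) \<le> integral {a..b} (\<lambda>s. w s * integral {0..b} w ^ j)"
  proof (rule integral_le)
    show "(\<lambda>s. w s * integral {0..s} w ^ j) integrable_on {a..b}"
      using ab by (intro integrable_on_subinterval[OF f]) auto
    show "(\<lambda>s. w s * integral {0..b} w ^ j) integrable_on {a..b}"
      using ab by (intro integrable_on_mult_left integrable_on_subinterval[OF w_integrable]) auto
  qed (use ab w_nonneg indefinite_integral_nonneg indefinite_integral_mono in
         \<open>auto intro!: mult_left_mono power_mono\<close>)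
  also have "\<dots> = (integral {0..b} w - integral {0..a} w) * integral {0..b} w ^ j"
    by (simp add: indefinite_integral_diff[OF ab])
  finally show ?thesis .
qed

lemma integral_mult_indefinite_integral_power_step:
  assumes f: "(\<lambda>s. w s * integral {0..s} w ^ j) integrable_on {0..t}"
    and ab: "0 \<le> a" "a \<le> b" "b \<le> t" and step: "K * (b - a) \<le> \<omega>"
    and le_a: "integral {0..a} (\<lambda>s. w s * integral {0..s} w ^ j)
      \<le> integral {0..a} w ^ Suc j / real (Suc j) + \<omega> * integral {0..a} w ^ j"
  shows "integral {0..b} (\<lambda>s. w s * integral {0..s} w ^ j)
    \<le> integral {0..b} w ^ Suc j / real (Suc j) + \<omega> * integral {0..b} w ^ j"
proof -
  have "integral {0..b} (\<lambda>s. w s * integral {0..s} w ^ j)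
      = integral {0..a} (\<lambda>s. w s * integral {0..s} w ^ j) + integral {a..b} (\<lambda>s. w s * integral {0..s} w ^ j)"
    using Henstock_Kurzweil_Integration.integral_combine[where a=0 and c=a and b=b,
        OF _ _ integrable_on_subinterval[OF f, of 0 b]] ab by simp
  also have "\<dots> \<le> integral {0..b} w ^ Suc j / real (Suc j) + \<omega> * integral {0..b} w ^ j"
  proof (rule power_increment_le[OF _ _ _ le_a integral_mult_indefinite_integral_power_piece[OF f ab]])
    show "0 \<le> integral {0..a} w" using ab by (intro indefinite_integral_nonneg) auto
    show "integral {0..a} w \<le> integral {0..b} w" by (rule indefinite_integral_mono[OF ab])
    show "integral {0..b} w - integral {0..a} w \<le> \<omega>"
      using indefinite_integral_increment_le[OF ab] step by linarith
  qed
  finally show ?thesis .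
qed

lemma integral_mult_indefinite_integral_power_approx:
  assumes f: "(\<lambda>s. w s * integral {0..s} w ^ j) integrable_on {0..t}"
    and u: "0 \<le> u" "u \<le> t" and m: "0 < m"
  shows "integral {0..u} (\<lambda>s. w s * integral {0..s} w ^ j)
    \<le> integral {0..u} w ^ Suc j / real (Suc j) + K * u / real m * integral {0..u} w ^ j"
proof -
  define x where "x k = real k * u / real m" for k
  have x: "0 \<le> x k" "x (Suc k) = x k + u / real m" for k
    using u m by (simp_all add: x_def add_divide_distrib distrib_right)
  have x_le: "x k \<le> t" if "k \<le> m" for k
  proof -
    have "x k \<le> real m * u / real m"
      unfolding x_def using that u m by (intro divide_right_mono mult_right_mono) auto
    then show ?thesis using m u by simp
  qed
  have "integral {0..x k} (\<lambda>s. w s * integral {0..s} w ^ j)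
      \<le> integral {0..x k} w ^ Suc j / real (Suc j) + K * u / real m * integral {0..x k} w ^ j"
    if "k \<le> m" for k
    using that
  proof (induction k)
    case 0
    have "0 \<le> K" using w_nonneg[of 0] w_le[of 0] u by auto
    then show ?case using u m by (simp add: x_def)
  next
    case (Suc k)
    have ab: "0 \<le> x k" "x k \<le> x (Suc k)" "x (Suc k) \<le> t"
      using x[of k] x_le[OF Suc.prems] u m by simp_all
    have "K * (x (Suc k) - x k) \<le> K * u / real m" by (simp add: x(2))
    from integral_mult_indefinite_integral_power_step[OF f ab this] Suc show ?case by simp

  qed
  from this[of m] m show ?thesis by (simp add: x_def)
qed

lemma integral_mult_indefinite_integral_power_le_of_le:
  assumes f: "(\<lambda>s. w s * integral {0..s} w ^ j) integrable_on {0..t}" and u: "0 \<le> u" "u \<le> t"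
  shows "integral {0..u} (\<lambda>s. w s * integral {0..s} w ^ j) \<le> integral {0..u} w ^ Suc j / real (Suc j)"
proof -
  define V where "V = integral {0..u} w ^ Suc j / real (Suc j)"
  have "(\<lambda>m. V + K * u / real m * integral {0..u} w ^ j) \<longlonglongrightarrow> V + 0 * integral {0..u} w ^ j"
    by (intro tendsto_intros)
  then have "(\<lambda>m. V + K * u / real m * integral {0..u} w ^ j) \<longlonglongrightarrow> V" by simp
  then show ?thesis
    unfolding V_def[symmetric]
    by (rule LIMSEQ_le_const, intro exI[of _ 1] allI impI)
       (use integral_mult_indefinite_integral_power_approx[OF f u] in \<open>simp add: V_def\<close>)
qed

end

lemma integral_mult_indefinite_integral_power_le:
  fixes w :: "real \<Rightarrow> real"
  assumes w: "w \<in> borel_measurable (lebesgue_on {0..t})" "bounded (w ` {0..t})"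
    and w_nonneg: "\<And>s. s \<in> {0..t} \<Longrightarrow> 0 \<le> w s" and u: "0 \<le> u" "u \<le> t"
  shows "integral {0..u} (\<lambda>s. w s * integral {0..s} w ^ j) \<le> integral {0..u} w ^ Suc j / real (Suc j)"
proof -
  obtain K where "\<forall>s\<in>{0..t}. norm (w s) \<le> K" using w(2) by (auto simp: bounded_iff)
  then have "\<And>s. s \<in> {0..t} \<Longrightarrow> w s \<le> K" by (metis abs_ge_self order_trans real_norm_def)
  then show ?thesis
    using bounded_measurable_integrable[OF w] w_nonneg
      integrable_mult_indefinite_integral_power[OF w w] u
    by (intro integral_mult_indefinite_integral_power_le_of_le[where K=K]) auto
qed

section \<open>Time-dependent potentials and the Dyson series\<close>

definition anchored_at :: "'s \<Rightarrow> 's pot \<Rightarrow> bool" where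
  "anchored_at x Q \<longleftrightarrow> (\<forall>Z \<sigma> \<tau>. Q Z \<sigma> \<tau> \<noteq> 0 \<longrightarrow> x \<in> Z)"

context spin_system
begin

definition relevant_entry :: "'s set \<Rightarrow> 's config \<Rightarrow> 's config \<Rightarrow> bool" where
  "relevant_entry Z \<sigma> \<tau> \<longleftrightarrow> Z \<subseteq> \<Lambda> \<and> \<sigma> \<in> \<C> \<and> \<tau> \<in> \<C>"

definition regular_family :: "real \<Rightarrow> (real \<Rightarrow> 's pot) \<Rightarrow> bool" where
  "regular_family t Q \<longleftrightarrow> (\<forall>Z \<sigma> \<tau>. relevant_entry Z \<sigma> \<tau> \<longrightarrow>
      (\<lambda>s. Q s Z \<sigma> \<tau>) \<in> borel_measurable (lebesgue_on {0..t}) \<and> bounded ((\<lambda>s. Q s Z \<sigma> \<tau>) ` {0..t}))"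

lemma regular_familyD:
  assumes "regular_family t Q" "relevant_entry Z \<sigma> \<tau>"
  shows "(\<lambda>s. Q s Z \<sigma> \<tau>) \<in> borel_measurable (lebesgue_on {0..t})"
    and "bounded ((\<lambda>s. Q s Z \<sigma> \<tau>) ` {0..t})"
  using assms by (auto simp: regular_family_def)

lemma regular_family_integrable:
  "regular_family t Q \<Longrightarrow> relevant_entry Z \<sigma> \<tau> \<Longrightarrow> u \<le> t \<Longrightarrow> (\<lambda>s. Q s Z \<sigma> \<tau>) integrable_on {0..u}"
  by (rule bounded_measurable_integrable) (auto simp: regular_family_def)

lemma regular_family_if_tpot: "tpot \<Lambda> d t \<Phi> \<Longrightarrow> regular_family t \<Phi>"
  unfolding tpot_def regular_family_def relevant_entry_def
  by (auto intro!: borel_measurable_lebesgue_on_if_lborel)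

lemma regular_family_const: "regular_family t (\<lambda>_. Q)"
  by (auto simp: regular_family_def intro: bounded_const_comp)

lemma regular_family_diff:
  "regular_family t P \<Longrightarrow> regular_family t Q \<Longrightarrow> regular_family t (\<lambda>s. pot_diff (P s) (Q s))"
  unfolding regular_family_def pot_diff_def by (auto intro: bounded_minus_comp borel_measurable_diff)

lemma regular_family_add: "regular_family t P \<Longrightarrow> regular_family t Q
    \<Longrightarrow> regular_family t (\<lambda>s Z \<sigma> \<tau>. P s Z \<sigma> \<tau> + Q s Z \<sigma> \<tau>)"
  unfolding regular_family_def by (auto intro: bounded_plus_comp borel_measurable_add)

lemma relevant_entry_commutator_pairs:
  assumes "p \<in> commutator_pairs Z" "\<sigma> \<in> \<C>" "\<tau> \<in> \<C>"
  shows "relevant_entry (fst p) \<sigma> \<tau>" "relevant_entry (snd p) \<sigma> \<tau>"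
  using assms by (auto simp: relevant_entry_def commutator_pairs_def)

lemma regular_family_ad_pot:
  assumes P: "regular_family t P" and Q: "regular_family t Q"
  shows "regular_family t (\<lambda>s. ad_pot \<Lambda> d (P s) (Q s))"
  unfolding regular_family_def ad_pot_expand
proof (intro allI impI conjI)
  fix Z \<sigma> \<tau> assume "relevant_entry Z \<sigma> \<tau>"
  then have entries: "\<sigma> \<in> \<C>" "\<tau> \<in> \<C>" by (auto simp: relevant_entry_def)
  note rel = relevant_entry_commutator_pairs
  show "(\<lambda>s. \<Sum>p\<in>commutator_pairs Z. \<Sum>\<rho>\<in>\<C>. P s (fst p) \<sigma> \<rho> * Q s (snd p) \<rho> \<tau> - Q s (snd p) \<sigma> \<rho> * P s (fst p) \<rho> \<tau>)
      \<in> borel_measurable (lebesgue_on {0..t})"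
    by (intro borel_measurable_sum borel_measurable_diff borel_measurable_times
        regular_familyD(1)[OF P] regular_familyD(1)[OF Q] rel entries)
  show "bounded ((\<lambda>s. \<Sum>p\<in>commutator_pairs Z. \<Sum>\<rho>\<in>\<C>. P s (fst p) \<sigma> \<rho> * Q s (snd p) \<rho> \<tau> - Q s (snd p) \<sigma> \<rho> * P s (fst p) \<rho> \<tau>) ` {0..t})"
    by (intro bounded_sum_comp bounded_minus_comp bounded_mult_comp finite_commutator_pairs finite_configs
        regular_familyD(2)[OF P] regular_familyD(2)[OF Q] rel entries)
qed

lemma regular_family_integral:
  "regular_family t Q \<Longrightarrow> regular_family t (\<lambda>u Z \<sigma> \<tau>. integral {0..u} (\<lambda>s. Q s Z \<sigma> \<tau>))"
  unfolding regular_family_def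
  using borel_measurable_indefinite_integral bounded_indefinite_integral by blast

lemma bounded_opnorm_family:
  assumes "regular_family t Q" "Z \<subseteq> \<Lambda>"
  shows "bounded ((\<lambda>s. opnorm \<C> (Q s Z)) ` {0..t})"
proof -
  have "bounded ((\<lambda>s. entry_norm_sum \<C> (Q s Z)) ` {0..t})"
    unfolding entry_norm_sum_def using assms
    by (intro bounded_sum_comp finite_configs)
       (auto simp: regular_family_def relevant_entry_def bounded_norm_comp)
  then obtain B where "\<forall>s\<in>{0..t}. \<bar>entry_norm_sum \<C> (Q s Z)\<bar> \<le> B" by (auto simp: bounded_iff)
  then have "\<forall>s\<in>{0..t}. norm (opnorm \<C> (Q s Z)) \<le> B"
    using opnorm_le_entry_norm_sum[OF finite_configs] opnorm_nonneg[OF finite_configs]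
    by (metis abs_le_D1 abs_of_nonneg order_trans real_norm_def)
  then show ?thesis by (intro bounded_iff[THEN iffD2] exI[of _ B]) auto
qed

lemma borel_measurable_opnorm_family:
  "regular_family t Q \<Longrightarrow> Z \<subseteq> \<Lambda> \<Longrightarrow> (\<lambda>s. opnorm \<C> (Q s Z)) \<in> borel_measurable (lebesgue_on {0..t})"
  by (rule borel_measurable_opnorm[OF finite_configs]) (auto simp: regular_family_def relevant_entry_def)

lemma site_weight_family:
  assumes "regular_family t Q"
  shows "(\<lambda>s. site_weight \<kappa> (Q s) x) \<in> borel_measurable (lebesgue_on {0..t})"
    and "bounded ((\<lambda>s. site_weight \<kappa> (Q s) x) ` {0..t})"
  unfolding site_weight_def using assms
  by (auto simp: sets_at_def intro!: borel_measurable_sum borel_measurable_times bounded_sum_comp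
      bounded_mult_comp bounded_const_comp bounded_opnorm_family borel_measurable_opnorm_family
      finite_sets_at[unfolded sets_at_def])

lemma pot_norm_family:
  assumes "regular_family t Q"
  shows "(\<lambda>s. pot_norm \<Lambda> d \<kappa> (Q s)) \<in> borel_measurable (lebesgue_on {0..t})"
    and "bounded ((\<lambda>s. pot_norm \<Lambda> d \<kappa> (Q s)) ` {0..t})"
proof -
  have eq: "pot_norm \<Lambda> d \<kappa> (Q s) = (MAX i\<in>insert None (Some ` \<Lambda>). case i of None \<Rightarrow> 0 | Some x \<Rightarrow> site_weight \<kappa> (Q s) x)" for s
    unfolding pot_norm_eq_Max by (simp add: image_image)
  show "(\<lambda>s. pot_norm \<Lambda> d \<kappa> (Q s)) \<in> borel_measurable (lebesgue_on {0..t})"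
    unfolding eq by (rule borel_measurable_Max) (auto simp: finite_\<Lambda> site_weight_family[OF assms] split: option.split)
  have "bounded ((\<lambda>s. \<Sum>x\<in>\<Lambda>. site_weight \<kappa> (Q s) x) ` {0..t})"
    by (intro bounded_sum_comp finite_\<Lambda> site_weight_family[OF assms])
  then obtain B where B: "\<forall>s\<in>{0..t}. \<bar>\<Sum>x\<in>\<Lambda>. site_weight \<kappa> (Q s) x\<bar> \<le> B" by (auto simp: bounded_iff)
  have "norm (pot_norm \<Lambda> d \<kappa> (Q s)) \<le> B" if "s \<in> {0..t}" for s
  proof -
    have "pot_norm \<Lambda> d \<kappa> (Q s) \<le> (\<Sum>x\<in>\<Lambda>. site_weight \<kappa> (Q s) x)"
      by (intro pot_norm_leI sum_nonneg site_weight_nonneg member_le_sum finite_\<Lambda>)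
    then show ?thesis using B that pot_norm_nonneg[of \<kappa> "Q s"] by force
  qed
  then show "bounded ((\<lambda>s. pot_norm \<Lambda> d \<kappa> (Q s)) ` {0..t})"
    by (intro bounded_iff[THEN iffD2] exI[of _ B]) auto
qed

lemma pot_norm_integral_le:
  assumes Q: "regular_family t Q" and u: "0 \<le> u" "u \<le> t"
    and b: "\<And>s. s \<in> {0..u} \<Longrightarrow> pot_norm \<Lambda> d \<kappa> (Q s) \<le> b s" "b integrable_on {0..u}"
  shows "pot_norm \<Lambda> d \<kappa> (\<lambda>Z \<sigma> \<tau>. integral {0..u} (\<lambda>s. Q s Z \<sigma> \<tau>)) \<le> integral {0..u} b"
proof (rule pot_norm_leI)
  show "0 \<le> integral {0..u} b"
    by (rule integral_nonneg[OF b(2)]) (meson b(1) order_trans pot_norm_nonneg)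
  fix x assume x: "x \<in> \<Lambda>"
  have int: "(\<lambda>s. opnorm \<C> (Q s Z)) integrable_on {0..u}" if "Z \<subseteq> \<Lambda>" for Z
    using borel_measurable_opnorm_family[OF Q that] bounded_opnorm_family[OF Q that] u(2)
    by (rule bounded_measurable_integrable)
  have "site_weight \<kappa> (\<lambda>Z \<sigma> \<tau>. integral {0..u} (\<lambda>s. Q s Z \<sigma> \<tau>)) x
      \<le> (\<Sum>Z\<in>sets_at x. exp (\<kappa> * real (card Z)) * integral {0..u} (\<lambda>s. opnorm \<C> (Q s Z)))"
    unfolding site_weight_def
  proof (intro sum_mono mult_left_mono)
    fix Z assume "Z \<in> sets_at x"
    then have Z: "Z \<subseteq> \<Lambda>" by (auto simp: sets_at_def)
    show "opnorm \<C> (\<lambda>\<sigma> \<tau>. integral {0..u} (\<lambda>s. Q s Z \<sigma> \<tau>)) \<le> integral {0..u} (\<lambda>s. opnorm \<C> (Q s Z))"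
      using Z u by (intro opnorm_integral_le[OF finite_configs] int regular_family_integrable[OF Q])
        (auto simp: relevant_entry_def)
  qed simp
  also have "\<dots> = integral {0..u} (\<lambda>s. site_weight \<kappa> (Q s) x)"
    unfolding site_weight_def
    by (subst integral_sum)
       (auto simp: finite_sets_at finite_sets_at[unfolded sets_at_def] sets_at_def
         intro!: integrable_on_mult_right int)
  also have "\<dots> \<le> integral {0..u} b"
    using site_weight_family[OF Q] u
    by (intro integral_le[OF bounded_measurable_integrable b(2)])
       (auto intro: order_trans[OF site_weight_le_pot_norm[OF x] b(1)])
  finally show "site_weight \<kappa> (\<lambda>Z \<sigma> \<tau>. integral {0..u} (\<lambda>s. Q s Z \<sigma> \<tau>)) x \<le> integral {0..u} b" .
qed

text \<open>The \<open>n\<close>-th term of the Dyson series, without its factor \<open>\<i>\<^sup>n\<close>.\<close>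
primrec dyson_term :: "(real \<Rightarrow> 's pot) \<Rightarrow> 's pot \<Rightarrow> nat \<Rightarrow> real \<Rightarrow> 's pot" where
  "dyson_term \<Phi> \<Theta> 0 = (\<lambda>u. \<Theta>)"
| "dyson_term \<Phi> \<Theta> (Suc n) =
     (\<lambda>u Z \<sigma> \<tau>. integral {0..u} (\<lambda>s. ad_pot \<Lambda> d (\<Phi> s) (dyson_term \<Phi> \<Theta> n s) Z \<sigma> \<tau>))"

lemma regular_family_dyson_term: "regular_family t \<Phi> \<Longrightarrow> regular_family t (dyson_term \<Phi> \<Theta> n)"
  by (induction n) (simp_all add: regular_family_const regular_family_integral regular_family_ad_pot)

definition commutes_with_integral :: "('s pot \<Rightarrow> 's pot) \<Rightarrow> bool" where
  "commutes_with_integral L \<longleftrightarrow>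
    (\<forall>Q Q'. (\<forall>Z \<sigma> \<tau>. relevant_entry Z \<sigma> \<tau> \<longrightarrow> Q Z \<sigma> \<tau> = Q' Z \<sigma> \<tau>)
       \<longrightarrow> (\<forall>Z \<sigma> \<tau>. relevant_entry Z \<sigma> \<tau> \<longrightarrow> L Q Z \<sigma> \<tau> = L Q' Z \<sigma> \<tau>)) \<and>
    (\<forall>Q (u::real). (\<forall>Z \<sigma> \<tau>. relevant_entry Z \<sigma> \<tau> \<longrightarrow> (\<lambda>s. Q s Z \<sigma> \<tau>) integrable_on {0..u})
       \<longrightarrow> (\<forall>Z \<sigma> \<tau>. relevant_entry Z \<sigma> \<tau> \<longrightarrow> (\<lambda>s. L (Q s) Z \<sigma> \<tau>) integrable_on {0..u} \<and>
             L (\<lambda>Z \<sigma> \<tau>. integral {0..u} (\<lambda>s. Q s Z \<sigma> \<tau>)) Z \<sigma> \<tau> = integral {0..u} (\<lambda>s. L (Q s) Z \<sigma> \<tau>)))"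

lemma commutes_with_integralD:
  assumes "commutes_with_integral L"
  shows "(\<And>Z \<sigma> \<tau>. relevant_entry Z \<sigma> \<tau> \<Longrightarrow> Q Z \<sigma> \<tau> = Q' Z \<sigma> \<tau>) \<Longrightarrow> relevant_entry Z \<sigma> \<tau>
      \<Longrightarrow> L Q Z \<sigma> \<tau> = L Q' Z \<sigma> \<tau>"
    and "(\<And>Z \<sigma> \<tau>. relevant_entry Z \<sigma> \<tau> \<Longrightarrow> (\<lambda>s. R s Z \<sigma> \<tau>) integrable_on {0..u::real})
      \<Longrightarrow> relevant_entry Z \<sigma> \<tau> \<Longrightarrow> (\<lambda>s. L (R s) Z \<sigma> \<tau>) integrable_on {0..u}"
    and "(\<And>Z \<sigma> \<tau>. relevant_entry Z \<sigma> \<tau> \<Longrightarrow> (\<lambda>s. R s Z \<sigma> \<tau>) integrable_on {0..u::real})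
      \<Longrightarrow> relevant_entry Z \<sigma> \<tau> \<Longrightarrow> L (\<lambda>Z \<sigma> \<tau>. integral {0..u} (\<lambda>s. R s Z \<sigma> \<tau>)) Z \<sigma> \<tau> = integral {0..u} (\<lambda>s. L (R s) Z \<sigma> \<tau>)"
proof -
  note eq = assms[unfolded commutes_with_integral_def, THEN conjunct1, rule_format]
  note int = assms[unfolded commutes_with_integral_def, THEN conjunct2, rule_format]
  show "L Q Z \<sigma> \<tau> = L Q' Z \<sigma> \<tau>"
    if "\<And>Z \<sigma> \<tau>. relevant_entry Z \<sigma> \<tau> \<Longrightarrow> Q Z \<sigma> \<tau> = Q' Z \<sigma> \<tau>" "relevant_entry Z \<sigma> \<tau>"
    using eq[of Q Q' Z \<sigma> \<tau>] that by blast
  show "(\<lambda>s. L (R s) Z \<sigma> \<tau>) integrable_on {0..u}"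
    and "L (\<lambda>Z \<sigma> \<tau>. integral {0..u} (\<lambda>s. R s Z \<sigma> \<tau>)) Z \<sigma> \<tau> = integral {0..u} (\<lambda>s. L (R s) Z \<sigma> \<tau>)"
    if "\<And>Z \<sigma> \<tau>. relevant_entry Z \<sigma> \<tau> \<Longrightarrow> (\<lambda>s. R s Z \<sigma> \<tau>) integrable_on {0..u}" "relevant_entry Z \<sigma> \<tau>"
    using int[of R u Z \<sigma> \<tau>] that by blast+
qed

lemma commutes_with_integral_id: "commutes_with_integral (\<lambda>Q. Q)"
  unfolding commutes_with_integral_def by auto

lemma commutes_with_integral_comp:
  assumes L1: "commutes_with_integral L1" and L2: "commutes_with_integral L2"
  shows "commutes_with_integral (\<lambda>Q. L1 (L2 Q))"
  unfolding commutes_with_integral_def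
proof (intro conjI allI impI)
  fix Q Q' :: "'s pot" and Z \<sigma> \<tau>
  assume "\<forall>Z \<sigma> \<tau>. relevant_entry Z \<sigma> \<tau> \<longrightarrow> Q Z \<sigma> \<tau> = Q' Z \<sigma> \<tau>" "relevant_entry Z \<sigma> \<tau>"
  then show "L1 (L2 Q) Z \<sigma> \<tau> = L1 (L2 Q') Z \<sigma> \<tau>"
    by (intro commutes_with_integralD(1)[OF L1] commutes_with_integralD(1)[OF L2]) auto
next
  fix Q :: "real \<Rightarrow> 's pot" and u :: real and Z \<sigma> \<tau>
  assume int: "\<forall>Z \<sigma> \<tau>. relevant_entry Z \<sigma> \<tau> \<longrightarrow> (\<lambda>s. Q s Z \<sigma> \<tau>) integrable_on {0..u}"
    and Z: "relevant_entry Z \<sigma> \<tau>"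
  have int2: "(\<lambda>s. L2 (Q s) Z' \<sigma>' \<tau>') integrable_on {0..u}" if "relevant_entry Z' \<sigma>' \<tau>'" for Z' \<sigma>' \<tau>'
    using int that by (intro commutes_with_integralD(2)[OF L2]) auto
  show "(\<lambda>s. L1 (L2 (Q s)) Z \<sigma> \<tau>) integrable_on {0..u}"
    by (rule commutes_with_integralD(2)[OF L1 int2 Z])
  have "L1 (L2 (\<lambda>Z \<sigma> \<tau>. integral {0..u} (\<lambda>s. Q s Z \<sigma> \<tau>))) Z \<sigma> \<tau>
      = L1 (\<lambda>Z \<sigma> \<tau>. integral {0..u} (\<lambda>s. L2 (Q s) Z \<sigma> \<tau>)) Z \<sigma> \<tau>"
    using int by (intro commutes_with_integralD(1)[OF L1 _ Z] commutes_with_integralD(3)[OF L2]) auto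
  also have "\<dots> = integral {0..u} (\<lambda>s. L1 (L2 (Q s)) Z \<sigma> \<tau>)"
    by (rule commutes_with_integralD(3)[OF L1 int2 Z])
  finally show "L1 (L2 (\<lambda>Z \<sigma> \<tau>. integral {0..u} (\<lambda>s. Q s Z \<sigma> \<tau>))) Z \<sigma> \<tau>
      = integral {0..u} (\<lambda>s. L1 (L2 (Q s)) Z \<sigma> \<tau>)" .
qed

lemma commutes_with_integral_ad_pot: "commutes_with_integral (ad_pot \<Lambda> d P)"
  unfolding commutes_with_integral_def
proof (intro conjI allI impI)
  fix Q Q' :: "'s pot" and Z \<sigma> \<tau>
  assume "\<forall>Z \<sigma> \<tau>. relevant_entry Z \<sigma> \<tau> \<longrightarrow> Q Z \<sigma> \<tau> = Q' Z \<sigma> \<tau>" "relevant_entry Z \<sigma> \<tau>"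
  then show "ad_pot \<Lambda> d P Q Z \<sigma> \<tau> = ad_pot \<Lambda> d P Q' Z \<sigma> \<tau>"
    unfolding ad_pot_expand
    by (intro sum.cong refl) (auto simp: relevant_entry_def commutator_pairs_def)
next
  fix Q :: "real \<Rightarrow> 's pot" and u :: real and Z \<sigma> \<tau>
  assume int: "\<forall>Z \<sigma> \<tau>. relevant_entry Z \<sigma> \<tau> \<longrightarrow> (\<lambda>s. Q s Z \<sigma> \<tau>) integrable_on {0..u}"
    and "relevant_entry Z \<sigma> \<tau>"
  then have entries: "\<sigma> \<in> \<C>" "\<tau> \<in> \<C>" by (auto simp: relevant_entry_def)
  define F where "F p \<rho> s = P (fst p) \<sigma> \<rho> * Q s (snd p) \<rho> \<tau> - Q s (snd p) \<sigma> \<rho> * P (fst p) \<rho> \<tau>"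
    for p \<rho> s
  have int_F: "F p \<rho> integrable_on {0..u}" if "p \<in> commutator_pairs Z" "\<rho> \<in> \<C>" for p \<rho>
    unfolding F_def using int relevant_entry_commutator_pairs[OF that(1)] that(2) entries
    by (intro integrable_diff integrable_on_mult_left integrable_on_mult_right) auto
  have ad_eq: "ad_pot \<Lambda> d P (Q s) Z \<sigma> \<tau> = (\<Sum>p\<in>commutator_pairs Z. \<Sum>\<rho>\<in>\<C>. F p \<rho> s)" for s
    by (simp add: ad_pot_expand F_def)
  show "(\<lambda>s. ad_pot \<Lambda> d P (Q s) Z \<sigma> \<tau>) integrable_on {0..u}"
    unfolding ad_eq using int_F by (intro integrable_sum finite_commutator_pairs finite_configs) auto
  have "ad_pot \<Lambda> d P (\<lambda>Z \<sigma> \<tau>. integral {0..u} (\<lambda>s. Q s Z \<sigma> \<tau>)) Z \<sigma> \<tau>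
      = (\<Sum>p\<in>commutator_pairs Z. \<Sum>\<rho>\<in>\<C>. integral {0..u} (F p \<rho>))"
    unfolding ad_pot_expand F_def
    using int relevant_entry_commutator_pairs entries
    by (intro sum.cong refl, subst integral_diff)
       (auto intro!: integrable_on_mult_left integrable_on_mult_right)
  also have "\<dots> = integral {0..u} (\<lambda>s. ad_pot \<Lambda> d P (Q s) Z \<sigma> \<tau>)"
    unfolding ad_eq using int_F
    by (simp add: integral_sum integrable_sum finite_commutator_pairs finite_configs)
  finally show "ad_pot \<Lambda> d P (\<lambda>Z \<sigma> \<tau>. integral {0..u} (\<lambda>s. Q s Z \<sigma> \<tau>)) Z \<sigma> \<tau>
      = integral {0..u} (\<lambda>s. ad_pot \<Lambda> d P (Q s) Z \<sigma> \<tau>)" .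
qed

text \<open>The iterated simplex integral of the Dyson series is computed from the outside in, so the
  operator \<open>L\<close> accumulated in front of the remaining integrals has to be pulled through them.\<close>
lemma iter_int_eq_dyson_term:
  assumes \<Phi>: "regular_family t \<Phi>"
  shows "commutes_with_integral L \<Longrightarrow> 0 \<le> u \<Longrightarrow> u \<le> t \<Longrightarrow> relevant_entry Z \<sigma> \<tau> \<Longrightarrow>
    iter_int n u (\<lambda>ts. L (foldr (\<lambda>s acc. ad_pot \<Lambda> d (\<Phi> s) acc) ts \<Theta>)) Z \<sigma> \<tau>
      = L (dyson_term \<Phi> \<Theta> n u) Z \<sigma> \<tau>"
proof (induction n arbitrary: L u Z \<sigma> \<tau>)
  case 0
  then show ?case by simp
next
  case (Suc n)
  have "iter_int (Suc n) u (\<lambda>ts. L (foldr (\<lambda>s acc. ad_pot \<Lambda> d (\<Phi> s) acc) ts \<Theta>)) Z \<sigma> \<tau>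
      = integral {0..u} (\<lambda>s. L (ad_pot \<Lambda> d (\<Phi> s) (dyson_term \<Phi> \<Theta> n s)) Z \<sigma> \<tau>)"
  proof (simp, rule integral_cong)
    fix s assume s: "s \<in> {0..u}"
    have "commutes_with_integral (\<lambda>Q. L (ad_pot \<Lambda> d (\<Phi> s) Q))"
      by (rule commutes_with_integral_comp[OF Suc.prems(1) commutes_with_integral_ad_pot])
    from Suc.IH[where L="\<lambda>Q. L (ad_pot \<Lambda> d (\<Phi> s) Q)", OF this _ _ Suc.prems(4)] s Suc.prems(3)
    show "iter_int n s (\<lambda>ts. L (ad_pot \<Lambda> d (\<Phi> s) (foldr (\<lambda>s acc. ad_pot \<Lambda> d (\<Phi> s) acc) ts \<Theta>))) Z \<sigma> \<tau>
        = L (ad_pot \<Lambda> d (\<Phi> s) (dyson_term \<Phi> \<Theta> n s)) Z \<sigma> \<tau>"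
      by simp
  qed
  also have "\<dots> = L (dyson_term \<Phi> \<Theta> (Suc n) u) Z \<sigma> \<tau>"
  proof -
    have "(\<lambda>s. ad_pot \<Lambda> d (\<Phi> s) (dyson_term \<Phi> \<Theta> n s) Z' \<sigma>' \<tau>') integrable_on {0..u}"
      if "relevant_entry Z' \<sigma>' \<tau>'" for Z' \<sigma>' \<tau>'
      using that Suc.prems(3)
      by (rule regular_family_integrable[OF regular_family_ad_pot[OF \<Phi> regular_family_dyson_term[OF \<Phi>]]])
    from commutes_with_integralD(3)[OF Suc.prems(1) this Suc.prems(4)] show ?thesis
      by simp
  qed
  finally show ?case .
qed

lemma dyson_eq_suminf:
  assumes "regular_family t \<Phi>" "0 \<le> t" "relevant_entry Z \<sigma> \<tau>"
  shows "dyson \<Lambda> d \<Phi> t \<Theta> Z \<sigma> \<tau> = (\<Sum>n. \<i> ^ n * dyson_term \<Phi> \<Theta> n t Z \<sigma> \<tau>)"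
  using iter_int_eq_dyson_term[OF assms(1) commutes_with_integral_id _ _ assms(3)] assms(2)
  by (simp add: dyson_def)

lemma anchored_at_dyson_term:
  assumes "anchored_at x \<Theta>"
  shows "anchored_at x (dyson_term \<Phi> \<Theta> n u)"
proof (induction n arbitrary: u)
  case 0
  then show ?case using assms by simp
next
  case (Suc n)
  have "dyson_term \<Phi> \<Theta> n s Z' a b = 0" if "x \<notin> Z'" for s Z' a b
    using Suc.IH that by (auto simp: anchored_at_def)
  then have "ad_pot \<Lambda> d (\<Phi> s) (dyson_term \<Phi> \<Theta> n s) Z \<sigma> \<tau> = 0" if "x \<notin> Z" for s Z \<sigma> \<tau>
    unfolding ad_pot_expand using that
    by (intro sum.neutral ballI) (auto simp: commutator_pairs_def)
  then show ?case by (auto simp: anchored_at_def)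
qed

text \<open>A commutator never produces a term on the empty set, so only the zeroth Dyson term of
  an observable supported on \<open>{}\<close> survives.\<close>
lemma dyson_term_single_pot_empty: "dyson_term \<Phi> (single_pot {} Ob) (Suc n) u Z \<sigma> \<tau> = 0"
proof (induction n arbitrary: u Z \<sigma> \<tau>)
  case 0
  have "ad_pot \<Lambda> d P (single_pot {} Ob) Z \<sigma> \<tau> = 0" for P
    unfolding ad_pot_expand by (intro sum.neutral ballI) (auto simp: commutator_pairs_def single_pot_def)
  then show ?case by simp
next
  case (Suc n)
  have "ad_pot \<Lambda> d P (dyson_term \<Phi> (single_pot {} Ob) (Suc n) s) Z \<sigma> \<tau> = 0" for P s
    unfolding ad_pot_expand Suc.IH by simp
  then show ?case by (subst dyson_term.simps(2)) simp
qed

end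

section \<open>Estimates for the Dyson terms\<close>

context spin_system
begin

definition pot_norm_integral :: "real \<Rightarrow> (real \<Rightarrow> 's pot) \<Rightarrow> real \<Rightarrow> real" where
  "pot_norm_integral \<kappa> \<Phi> u = integral {0..u} (\<lambda>s. pot_norm \<Lambda> d \<kappa> (\<Phi> s))"

lemma integrable_pot_norm:
  "regular_family t \<Phi> \<Longrightarrow> u \<le> t \<Longrightarrow> (\<lambda>s. pot_norm \<Lambda> d \<kappa> (\<Phi> s)) integrable_on {0..u}"
  using pot_norm_family by (blast intro: bounded_measurable_integrable)

lemma pot_norm_integral_nonneg:
  "regular_family t \<Phi> \<Longrightarrow> 0 \<le> u \<Longrightarrow> u \<le> t \<Longrightarrow> 0 \<le> pot_norm_integral \<kappa> \<Phi> u"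
  unfolding pot_norm_integral_def by (intro integral_nonneg integrable_pot_norm) (auto simp: pot_norm_nonneg)

lemma pot_norm_integral_mono:
  "regular_family t \<Phi> \<Longrightarrow> 0 \<le> a \<Longrightarrow> a \<le> b \<Longrightarrow> b \<le> t
    \<Longrightarrow> pot_norm_integral \<kappa> \<Phi> a \<le> pot_norm_integral \<kappa> \<Phi> b"
  unfolding pot_norm_integral_def
  using integrable_pot_norm[of t \<Phi> a \<kappa>] integrable_pot_norm[of t \<Phi> b \<kappa>]
  by (intro integral_subset_le) (auto simp: pot_norm_nonneg)

lemma integral_mult_pot_norm_integral_power_le:
  assumes "regular_family t \<Phi>" "0 \<le> u" "u \<le> t"
  shows "integral {0..u} (\<lambda>s. pot_norm \<Lambda> d \<kappa> (\<Phi> s) * pot_norm_integral \<kappa> \<Phi> s ^ j)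
    \<le> pot_norm_integral \<kappa> \<Phi> u ^ Suc j / real (Suc j)"
  unfolding pot_norm_integral_def
  using assms pot_norm_family[OF assms(1)]
  by (intro integral_mult_indefinite_integral_power_le) (auto simp: pot_norm_nonneg)

lemma integrable_mult_pot_norm_integral_power:
  assumes "regular_family t \<Phi>" "regular_family t \<Psi>" "u \<le> t"
  shows "(\<lambda>s. pot_norm \<Lambda> d \<kappa> (\<Psi> s) * pot_norm_integral \<kappa> \<Phi> s ^ j) integrable_on {0..u}"
  unfolding pot_norm_integral_def
  using pot_norm_family[OF assms(1)] pot_norm_family[OF assms(2)] assms(3)
  by (intro integrable_mult_indefinite_integral_power) auto

text \<open>Every commutator costs the factor \<open>4/(e h)\<close> of the commutator estimate, and the iterated
  time integral produces \<open>A(u)\<^sup>j/j!\<close>.\<close>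
lemma pot_norm_dyson_term_le:
  assumes \<Phi>: "regular_family t \<Phi>" and h: "0 < h" "real j * h \<le> \<kappa>" and u: "0 \<le> u" "u \<le> t"
  shows "pot_norm \<Lambda> d (\<kappa> - real j * h) (dyson_term \<Phi> \<Theta> j u)
    \<le> (4 / (exp 1 * h)) ^ j * pot_norm_integral \<kappa> \<Phi> u ^ j / fact j * pot_norm \<Lambda> d \<kappa> \<Theta>"
  using h(2) u
proof (induction j arbitrary: u)
  case 0
  then show ?case by simp
next
  case (Suc j)
  define c where "c = 4 / (exp 1 * h)"
  define A where "A = pot_norm_integral \<kappa> \<Phi>"
  define b where "b s = c ^ Suc j * pot_norm \<Lambda> d \<kappa> \<Theta> / fact j * (pot_norm \<Lambda> d \<kappa> (\<Phi> s) * A s ^ j)" for s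
  have c: "0 \<le> c" using h by (simp add: c_def)
  have jh: "real j * h \<le> \<kappa>" and lev: "0 \<le> \<kappa> - real (Suc j) * h" "\<kappa> - real (Suc j) * h < \<kappa> - real j * h"
    using Suc.prems h by (auto simp: algebra_simps)
  have integrand: "pot_norm \<Lambda> d (\<kappa> - real (Suc j) * h) (ad_pot \<Lambda> d (\<Phi> s) (dyson_term \<Phi> \<Theta> j s)) \<le> b s"
    if s: "s \<in> {0..u}" for s
  proof -
    have "pot_norm \<Lambda> d (\<kappa> - real (Suc j) * h) (ad_pot \<Lambda> d (\<Phi> s) (dyson_term \<Phi> \<Theta> j s))
        \<le> c * pot_norm \<Lambda> d (\<kappa> - real j * h) (\<Phi> s) * pot_norm \<Lambda> d (\<kappa> - real j * h) (dyson_term \<Phi> \<Theta> j s)"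
      using pot_norm_ad_pot_le[OF lev] by (simp add: c_def algebra_simps)
    also have "\<dots> \<le> c * pot_norm \<Lambda> d \<kappa> (\<Phi> s) * (c ^ j * A s ^ j / fact j * pot_norm \<Lambda> d \<kappa> \<Theta>)"
      using Suc.IH[OF jh, of s] s Suc.prems h mult_nonneg_nonneg[OF c pot_norm_nonneg]
      by (intro mult_mono mult_left_mono pot_norm_mono pot_norm_nonneg) (auto simp: A_def c_def)
    also have "\<dots> = b s" by (simp add: b_def)
    finally show ?thesis .
  qed
  have "b integrable_on {0..u}"
    unfolding b_def A_def using \<Phi> Suc.prems
    by (intro integrable_on_mult_right integrable_mult_pot_norm_integral_power) auto
  then have "pot_norm \<Lambda> d (\<kappa> - real (Suc j) * h) (dyson_term \<Phi> \<Theta> (Suc j) u) \<le> integral {0..u} b"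
    using pot_norm_integral_le[OF regular_family_ad_pot[OF \<Phi> regular_family_dyson_term[OF \<Phi>]]
        Suc.prems(2,3) integrand]
    by simp
  also have "\<dots> = c ^ Suc j * pot_norm \<Lambda> d \<kappa> \<Theta> / fact j
      * integral {0..u} (\<lambda>s. pot_norm \<Lambda> d \<kappa> (\<Phi> s) * A s ^ j)"
    unfolding b_def by (rule integral_mult_right)
  also have "\<dots> \<le> c ^ Suc j * pot_norm \<Lambda> d \<kappa> \<Theta> / fact j * (A u ^ Suc j / real (Suc j))"
    unfolding A_def using c Suc.prems
    by (intro mult_left_mono integral_mult_pot_norm_integral_power_le[OF \<Phi>]) (auto simp: pot_norm_nonneg)
  also have "\<dots> = c ^ Suc j * A u ^ Suc j / fact (Suc j) * pot_norm \<Lambda> d \<kappa> \<Theta>"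
    by (simp add: field_simps)
  finally show ?case by (simp add: c_def A_def)
qed

end

locale dyson_comparison = spin_system \<Lambda> d for \<Lambda> :: "'s set" and d :: "'s \<Rightarrow> nat" +
  fixes \<Phi> \<Phi>' :: "real \<Rightarrow> 's pot" and \<Theta> :: "'s pot" and t \<kappa> h :: real
  assumes regular_\<Phi>: "regular_family t \<Phi>" and regular_\<Phi>': "regular_family t \<Phi>'" and h_pos: "0 < h"
begin

abbreviation dyson_diff :: "nat \<Rightarrow> real \<Rightarrow> 's pot" where
  "dyson_diff j u \<equiv> pot_diff (dyson_term \<Phi> \<Theta> j u) (dyson_term \<Phi>' \<Theta> j u)"

abbreviation diff_integral :: "real \<Rightarrow> real" where
  "diff_integral \<equiv> pot_norm_integral \<kappa> (\<lambda>s. pot_diff (\<Phi> s) (\<Phi>' s))"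

abbreviation sum_integral :: "real \<Rightarrow> real" where
  "sum_integral u \<equiv> integral {0..u} (\<lambda>s. pot_norm \<Lambda> d \<kappa> (\<Phi> s) + pot_norm \<Lambda> d \<kappa> (\<Phi>' s))"

abbreviation commutator_factor :: real where
  "commutator_factor \<equiv> 4 / (exp 1 * h)"

lemma regular_diff: "regular_family t (\<lambda>s. pot_diff (\<Phi> s) (\<Phi>' s))"
  by (rule regular_family_diff[OF regular_\<Phi> regular_\<Phi>'])

lemma pot_norm_sum_family:
  "(\<lambda>s. pot_norm \<Lambda> d \<kappa> (\<Phi> s) + pot_norm \<Lambda> d \<kappa> (\<Phi>' s)) \<in> borel_measurable (lebesgue_on {0..t})"
  "bounded ((\<lambda>s. pot_norm \<Lambda> d \<kappa> (\<Phi> s) + pot_norm \<Lambda> d \<kappa> (\<Phi>' s)) ` {0..t})"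
  using pot_norm_family[OF regular_\<Phi>] pot_norm_family[OF regular_\<Phi>']
  by (auto intro: bounded_plus_comp)

lemma sum_integral_eq:
  "u \<le> t \<Longrightarrow> sum_integral u = pot_norm_integral \<kappa> \<Phi> u + pot_norm_integral \<kappa> \<Phi>' u"
  unfolding pot_norm_integral_def
  by (intro integral_add integrable_pot_norm[OF regular_\<Phi>] integrable_pot_norm[OF regular_\<Phi>'])

lemma pot_norm_integral_le_sum_integral:
  "0 \<le> u \<Longrightarrow> u \<le> t \<Longrightarrow> pot_norm_integral \<kappa> \<Phi> u \<le> sum_integral u"
  using sum_integral_eq pot_norm_integral_nonneg[OF regular_\<Phi>'] by simp

lemma sum_integral_mono: "0 \<le> a \<Longrightarrow> a \<le> b \<Longrightarrow> b \<le> t \<Longrightarrow> sum_integral a \<le> sum_integral b"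
  using sum_integral_eq pot_norm_integral_mono[OF regular_\<Phi>] pot_norm_integral_mono[OF regular_\<Phi>']
  by (simp add: add_mono)

lemma sum_integral_nonneg: "0 \<le> u \<Longrightarrow> u \<le> t \<Longrightarrow> 0 \<le> sum_integral u"
  using sum_integral_eq pot_norm_integral_nonneg[OF regular_\<Phi>] pot_norm_integral_nonneg[OF regular_\<Phi>']
  by simp

lemma dyson_diff_Suc:
  assumes "relevant_entry Z \<sigma> \<tau>" "u \<le> t"
  shows "dyson_diff (Suc j) u Z \<sigma> \<tau> = integral {0..u} (\<lambda>s.
    ad_pot \<Lambda> d (pot_diff (\<Phi> s) (\<Phi>' s)) (dyson_term \<Phi> \<Theta> j s) Z \<sigma> \<tau> + ad_pot \<Lambda> d (\<Phi>' s) (dyson_diff j s) Z \<sigma> \<tau>)"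
proof -
  have int: "(\<lambda>s. ad_pot \<Lambda> d (\<Psi> s) (dyson_term \<Psi> \<Theta> j s) Z \<sigma> \<tau>) integrable_on {0..u}"
    if "regular_family t \<Psi>" for \<Psi>
    using regular_family_integrable[OF regular_family_ad_pot[OF that regular_family_dyson_term[OF that]]] assms .
  have "ad_pot \<Lambda> d (\<Phi> s) P Z \<sigma> \<tau> - ad_pot \<Lambda> d (\<Phi>' s) P' Z \<sigma> \<tau>
      = ad_pot \<Lambda> d (pot_diff (\<Phi> s) (\<Phi>' s)) P Z \<sigma> \<tau> + ad_pot \<Lambda> d (\<Phi>' s) (pot_diff P P') Z \<sigma> \<tau>" for s P P'
    unfolding ad_pot_expand pot_diff_def sum_subtractf[symmetric] sum.distrib[symmetric]
    by (intro sum.cong refl) (simp add: algebra_simps)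
  then show ?thesis
    by (simp add: pot_diff_def integral_diff[OF int[OF regular_\<Phi>] int[OF regular_\<Phi>'], symmetric])
qed


lemma dyson_diff_integrand_le:
  assumes j: "real (Suc j) * h \<le> \<kappa>" and s: "0 \<le> s" "s \<le> u" "u \<le> t"
    and IH: "pot_norm \<Lambda> d (\<kappa> - real j * h) (dyson_diff j s) \<le> commutator_factor ^ j * diff_integral s
      * real j * sum_integral s ^ (j - 1) / fact (j - 1) * pot_norm \<Lambda> d \<kappa> \<Theta>"
  shows "pot_norm \<Lambda> d (\<kappa> - real (Suc j) * h) (\<lambda>Z \<sigma> \<tau>.
      ad_pot \<Lambda> d (pot_diff (\<Phi> s) (\<Phi>' s)) (dyson_term \<Phi> \<Theta> j s) Z \<sigma> \<tau> + ad_pot \<Lambda> d (\<Phi>' s) (dyson_diff j s) Z \<sigma> \<tau>)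
    \<le> commutator_factor ^ Suc j * pot_norm \<Lambda> d \<kappa> \<Theta>
      * (pot_norm \<Lambda> d \<kappa> (pot_diff (\<Phi> s) (\<Phi>' s)) * sum_integral s ^ j / fact j
         + diff_integral u * real j / fact (j - 1) * (pot_norm \<Lambda> d \<kappa> (\<Phi>' s) * sum_integral s ^ (j - 1)))"
proof -
  let ?c = commutator_factor and ?l = "\<kappa> - real j * h" and ?\<theta> = "pot_norm \<Lambda> d \<kappa> \<Theta>"
  have c: "0 \<le> ?c" using h_pos by simp
  have jh: "real j * h \<le> \<kappa>" and lev: "0 \<le> \<kappa> - real (Suc j) * h" "\<kappa> - real (Suc j) * h < ?l"
    using j h_pos by (auto simp: algebra_simps)
  have factor: "4 / (exp 1 * (?l - (\<kappa> - real (Suc j) * h))) = ?c" by (simp add: algebra_simps)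
  have "pot_norm \<Lambda> d ?l (dyson_term \<Phi> \<Theta> j s)
      \<le> ?c ^ j * pot_norm_integral \<kappa> \<Phi> s ^ j / fact j * ?\<theta>"
    using s by (intro pot_norm_dyson_term_le[OF regular_\<Phi> h_pos jh]) auto
  also have "\<dots> \<le> ?c ^ j * sum_integral s ^ j / fact j * ?\<theta>"
    using s c pot_norm_integral_le_sum_integral[of s] pot_norm_integral_nonneg[OF regular_\<Phi>, of s]
    by (intro mult_right_mono divide_right_mono mult_left_mono power_mono) (auto simp: pot_norm_nonneg)
  finally have dyson_le: "pot_norm \<Lambda> d ?l (dyson_term \<Phi> \<Theta> j s) \<le> ?c ^ j * sum_integral s ^ j / fact j * ?\<theta>" .
  have diff_le: "pot_norm \<Lambda> d ?l (dyson_diff j s)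
      \<le> ?c ^ j * diff_integral u * real j * sum_integral s ^ (j - 1) / fact (j - 1) * ?\<theta>"
    using IH pot_norm_integral_mono[OF regular_diff, of s u \<kappa>] s c sum_integral_nonneg[of s]
    by (auto intro!: order_trans[OF IH] mult_right_mono divide_right_mono mult_left_mono
        simp: pot_norm_nonneg)
  have "pot_norm \<Lambda> d (\<kappa> - real (Suc j) * h) (\<lambda>Z \<sigma> \<tau>.
      ad_pot \<Lambda> d (pot_diff (\<Phi> s) (\<Phi>' s)) (dyson_term \<Phi> \<Theta> j s) Z \<sigma> \<tau> + ad_pot \<Lambda> d (\<Phi>' s) (dyson_diff j s) Z \<sigma> \<tau>)
    \<le> ?c * pot_norm \<Lambda> d ?l (pot_diff (\<Phi> s) (\<Phi>' s)) * pot_norm \<Lambda> d ?l (dyson_term \<Phi> \<Theta> j s)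
      + ?c * pot_norm \<Lambda> d ?l (\<Phi>' s) * pot_norm \<Lambda> d ?l (dyson_diff j s)"
    using pot_norm_add_le pot_norm_ad_pot_le[OF lev, unfolded factor]
    by (blast intro: order_trans add_mono)
  also have "\<dots> \<le> ?c * pot_norm \<Lambda> d \<kappa> (pot_diff (\<Phi> s) (\<Phi>' s)) * (?c ^ j * sum_integral s ^ j / fact j * ?\<theta>)
      + ?c * pot_norm \<Lambda> d \<kappa> (\<Phi>' s)
        * (?c ^ j * diff_integral u * real j * sum_integral s ^ (j - 1) / fact (j - 1) * ?\<theta>)"
    using c dyson_le diff_le h_pos
    by (intro add_mono mult_mono mult_left_mono pot_norm_mono mult_nonneg_nonneg pot_norm_nonneg) auto
  also have "\<dots> = ?c ^ Suc j * ?\<theta> * (pot_norm \<Lambda> d \<kappa> (pot_diff (\<Phi> s) (\<Phi>' s)) * sum_integral s ^ j / fact j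
         + diff_integral u * real j / fact (j - 1) * (pot_norm \<Lambda> d \<kappa> (\<Phi>' s) * sum_integral s ^ (j - 1)))"
    by (simp only: power_Suc divide_inverse distrib_left mult_ac)
  finally show ?thesis .
qed


lemma integrable_mult_sum_integral_power:
  assumes "regular_family t \<Psi>" "u \<le> t"
  shows "(\<lambda>s. pot_norm \<Lambda> d \<kappa> (\<Psi> s) * sum_integral s ^ k) integrable_on {0..u}"
  using pot_norm_family[OF assms(1)] pot_norm_sum_family assms(2)
  by (rule integrable_mult_indefinite_integral_power)

lemma integral_diff_mult_sum_integral_power_le:
  assumes u: "0 \<le> u" "u \<le> t"
  shows "integral {0..u} (\<lambda>s. pot_norm \<Lambda> d \<kappa> (pot_diff (\<Phi> s) (\<Phi>' s)) * sum_integral s ^ j)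
    \<le> diff_integral u * sum_integral u ^ j"
proof -
  have "integral {0..u} (\<lambda>s. pot_norm \<Lambda> d \<kappa> (pot_diff (\<Phi> s) (\<Phi>' s)) * sum_integral s ^ j)
      \<le> integral {0..u} (\<lambda>s. pot_norm \<Lambda> d \<kappa> (pot_diff (\<Phi> s) (\<Phi>' s)) * sum_integral u ^ j)"
    using u sum_integral_mono sum_integral_nonneg integrable_pot_norm[OF regular_diff u(2)]
    by (intro integral_le integrable_mult_sum_integral_power[OF regular_diff] integrable_on_mult_left)
       (auto intro!: mult_left_mono power_mono simp: pot_norm_nonneg)
  also have "\<dots> = diff_integral u * sum_integral u ^ j" by (simp add: pot_norm_integral_def)
  finally show ?thesis .
qed

lemma integral_pot_norm_mult_sum_integral_power_le:
  assumes u: "0 \<le> u" "u \<le> t"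
  shows "integral {0..u} (\<lambda>s. pot_norm \<Lambda> d \<kappa> (\<Phi>' s) * sum_integral s ^ j)
    \<le> sum_integral u ^ Suc j / real (Suc j)"
proof -
  have "integral {0..u} (\<lambda>s. pot_norm \<Lambda> d \<kappa> (\<Phi>' s) * sum_integral s ^ j)
      \<le> integral {0..u} (\<lambda>s. (pot_norm \<Lambda> d \<kappa> (\<Phi> s) + pot_norm \<Lambda> d \<kappa> (\<Phi>' s)) * sum_integral s ^ j)"
    using u sum_integral_nonneg pot_norm_sum_family
    by (intro integral_le integrable_mult_sum_integral_power[OF regular_\<Phi>'] integrable_mult_indefinite_integral_power)
       (auto intro!: mult_right_mono simp: pot_norm_nonneg)
  also have "\<dots> \<le> sum_integral u ^ Suc j / real (Suc j)"
    using pot_norm_sum_family u by (intro integral_mult_indefinite_integral_power_le) (auto simp: pot_norm_nonneg)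
  finally show ?thesis .
qed

lemma integral_dyson_diff_bound_le:
  fixes u :: real and j :: nat
  assumes u: "0 \<le> u" "u \<le> t"
  defines "b \<equiv> \<lambda>s. pot_norm \<Lambda> d \<kappa> (pot_diff (\<Phi> s) (\<Phi>' s)) * sum_integral s ^ j / fact j
    + diff_integral u * real j / fact (j - 1) * (pot_norm \<Lambda> d \<kappa> (\<Phi>' s) * sum_integral s ^ (j - 1))"
  shows "b integrable_on {0..u}"
    and "integral {0..u} b \<le> diff_integral u * real (Suc j) * sum_integral u ^ j / fact j"
proof -
  note int = integrable_mult_sum_integral_power[OF regular_diff u(2)]
    integrable_mult_sum_integral_power[OF regular_\<Phi>' u(2)]
  show "b integrable_on {0..u}"
    unfolding b_def by (intro integrable_add integrable_on_divide integrable_on_mult_right int)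
  have "integral {0..u} b = integral {0..u} (\<lambda>s. pot_norm \<Lambda> d \<kappa> (pot_diff (\<Phi> s) (\<Phi>' s)) * sum_integral s ^ j)
      / fact j + diff_integral u * real j / fact (j - 1)
      * integral {0..u} (\<lambda>s. pot_norm \<Lambda> d \<kappa> (\<Phi>' s) * sum_integral s ^ (j - 1))"
    unfolding b_def
    by (subst integral_add) (auto simp only: integral_divide integral_mult_right
        intro: integrable_on_divide integrable_on_mult_right int)
  also have "\<dots> \<le> diff_integral u * sum_integral u ^ j / fact j
      + diff_integral u * real j / fact (j - 1) * (sum_integral u ^ Suc (j - 1) / real (Suc (j - 1)))"
    using pot_norm_integral_nonneg[OF regular_diff u]
    by (intro add_mono mult_left_mono divide_right_mono integral_diff_mult_sum_integral_power_le
        integral_pot_norm_mult_sum_integral_power_le u) auto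
  also have "\<dots> = diff_integral u * real (Suc j) * sum_integral u ^ j / fact j"
  proof (cases "j = 0")
    case False
    then have "fact j = real j * fact (j - 1)" "Suc (j - 1) = j" "0 < real j"
      by (simp_all add: fact_reduce)
    then show ?thesis by (simp add: field_simps)
  qed simp
  finally show "integral {0..u} b \<le> diff_integral u * real (Suc j) * sum_integral u ^ j / fact j" .
qed

lemma pot_norm_dyson_diff_le:
  "real j * h \<le> \<kappa> \<Longrightarrow> 0 \<le> u \<Longrightarrow> u \<le> t \<Longrightarrow> pot_norm \<Lambda> d (\<kappa> - real j * h) (dyson_diff j u)
    \<le> commutator_factor ^ j * diff_integral u * real j * sum_integral u ^ (j - 1) / fact (j - 1)
       * pot_norm \<Lambda> d \<kappa> \<Theta>"
proof (induction j arbitrary: u)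
  case 0
  have "dyson_diff 0 u = (\<lambda>Z \<sigma> \<tau>. 0)" by (simp add: pot_diff_def)
  then show ?case by simp
next
  case (Suc j)
  let ?c = commutator_factor and ?\<theta> = "pot_norm \<Lambda> d \<kappa> \<Theta>"
  define Q where "Q s Z \<sigma> \<tau> = ad_pot \<Lambda> d (pot_diff (\<Phi> s) (\<Phi>' s)) (dyson_term \<Phi> \<Theta> j s) Z \<sigma> \<tau>
    + ad_pot \<Lambda> d (\<Phi>' s) (dyson_diff j s) Z \<sigma> \<tau>" for s Z \<sigma> \<tau>
  define b where "b = (\<lambda>s. pot_norm \<Lambda> d \<kappa> (pot_diff (\<Phi> s) (\<Phi>' s)) * sum_integral s ^ j / fact j
    + diff_integral u * real j / fact (j - 1) * (pot_norm \<Lambda> d \<kappa> (\<Phi>' s) * sum_integral s ^ (j - 1)))"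
  have regular_Q: "regular_family t Q"
    unfolding Q_def
    by (intro regular_family_add regular_family_ad_pot regular_diff regular_\<Phi>' regular_family_diff
        regular_family_dyson_term regular_\<Phi>)
  have jh: "real j * h \<le> \<kappa>" using Suc.prems(1) h_pos by (simp add: algebra_simps)
  have integrand: "pot_norm \<Lambda> d (\<kappa> - real (Suc j) * h) (Q s) \<le> ?c ^ Suc j * ?\<theta> * b s"
    if "s \<in> {0..u}" for s
    unfolding Q_def b_def using that Suc.prems Suc.IH[OF jh, of s]
    by (intro dyson_diff_integrand_le) auto
  have "pot_norm \<Lambda> d (\<kappa> - real (Suc j) * h) (dyson_diff (Suc j) u)
      = pot_norm \<Lambda> d (\<kappa> - real (Suc j) * h) (\<lambda>Z \<sigma> \<tau>. integral {0..u} (\<lambda>s. Q s Z \<sigma> \<tau>))"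
    using Suc.prems
    by (intro pot_norm_cong) (unfold Q_def, rule dyson_diff_Suc, auto simp: relevant_entry_def)
  also have "\<dots> \<le> integral {0..u} (\<lambda>s. ?c ^ Suc j * ?\<theta> * b s)"
    using integral_dyson_diff_bound_le(1)[OF Suc.prems(2,3), of j, folded b_def] Suc.prems
    by (intro pot_norm_integral_le[OF regular_Q] integrand integrable_on_mult_right) auto
  also have "\<dots> = ?c ^ Suc j * ?\<theta> * integral {0..u} b"
    by (rule integral_mult_right)
  also have "\<dots> \<le> ?c ^ Suc j * ?\<theta> * (diff_integral u * real (Suc j) * sum_integral u ^ j / fact j)"
    using h_pos
    by (intro mult_left_mono integral_dyson_diff_bound_le(2)[OF Suc.prems(2,3), of j, folded b_def])
       (simp add: pot_norm_nonneg)
  finally show ?case by (simp add: field_simps)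
qed

end

section \<open>Convergence and comparison of the Dyson series\<close>

lemma power_self_div_fact_le_exp: "real n ^ n / fact n \<le> exp (real n)"
proof -
  have sums: "(\<lambda>k. real n ^ k / fact k) sums exp (real n)"
    using exp_converges[of "real n"] by (simp add: divide_inverse scaleR_conv_of_real mult.commute)
  have "(\<Sum>k\<in>{n}. real n ^ k / fact k) \<le> (\<Sum>k. real n ^ k / fact k)"
    by (rule sum_le_suminf[OF sums_summable[OF sums]]) auto
  then show ?thesis using sums_unique[OF sums] by simp
qed

lemma square_le_power_three_halves: "real n ^ 2 \<le> 4 * (3/2::real) ^ n"
proof (induction n rule: nat_less_induct)
  case (1 n)
  show ?case
  proof (cases "n < 6")
    case True
    then have "n = 0 \<or> n = 1 \<or> n = 2 \<or> n = 3 \<or> n = 4 \<or> n = 5" by auto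
    then show ?thesis by (auto simp: power_divide)
  next
    case False
    then obtain m where n: "n = Suc m" and m: "5 \<le> real m" by (cases n) auto
    have "5 * real m \<le> real m * real m" using m by (intro mult_right_mono) auto
    moreover have "real n ^ 2 = real m * real m + 2 * real m + 1"
      by (simp add: n power2_eq_square algebra_simps)
    ultimately have "real n ^ 2 \<le> 3/2 * real m ^ 2"
      using m unfolding power2_eq_square by linarith
    also have "\<dots> \<le> 3/2 * (4 * (3/2) ^ m)" using "1.IH" n by simp
    also have "\<dots> = 4 * (3/2) ^ n" by (simp add: n)
    finally show ?thesis .
  qed
qed

lemma square_mult_half_power_le: "real n ^ 2 * (1/2) ^ (n - 1) \<le> 8 * (3/4::real) ^ n"
proof (cases n)
  case (Suc m)
  have "real n ^ 2 * (1/2) ^ (n - 1) = 2 * (real n ^ 2 * (1/2) ^ n)" by (simp add: Suc)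
  also have "\<dots> \<le> 2 * (4 * (3/2) ^ n * (1/2) ^ n)"
    using square_le_power_three_halves[of n] by (intro mult_left_mono mult_right_mono) auto
  also have "\<dots> = 8 * (3/4::real) ^ n" by (simp flip: power_mult_distrib)
  finally show ?thesis .
qed simp

text \<open>With \<open>h = 2\<kappa>/(3n)\<close> the \<open>n\<close> commutators lower the decay rate from \<open>\<kappa>\<close> to \<open>\<kappa>/3\<close>, and the
  factor \<open>n\<^sup>n/n! \<le> e\<^sup>n\<close> is compensated by the smallness \<open>A \<le> \<kappa>/24\<close>.\<close>
lemma dyson_term_coefficient_le:
  fixes A \<kappa> :: real
  assumes "0 \<le> A" "A \<le> \<kappa>/24" "0 < \<kappa>" "0 < n"
  shows "(4 / (exp 1 * (2*\<kappa>/3 / real n))) ^ n * A ^ n / fact n \<le> (1/4) ^ n"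
proof -
  have "(4 / (exp 1 * (2*\<kappa>/3 / real n))) ^ n * A ^ n = (6 * real n / (exp 1 * \<kappa>) * A) ^ n"
    using assms by (simp add: power_mult_distrib field_simps)
  also have "\<dots> \<le> (6 * real n / (exp 1 * \<kappa>) * (\<kappa>/24)) ^ n"
    using assms by (intro power_mono mult_left_mono) auto
  also have "\<dots> = (real n / (4 * exp 1)) ^ n" using assms by (simp add: field_simps)
  finally have "(4 / (exp 1 * (2*\<kappa>/3 / real n))) ^ n * A ^ n / fact n \<le> (real n / (4 * exp 1)) ^ n / fact n"
    by (rule divide_right_mono) simp
  also have "\<dots> = real n ^ n / fact n / (4 * exp 1) ^ n"
    by (simp add: power_divide)
  also have "\<dots> \<le> exp (real n) / (4 * exp 1) ^ n"
    by (intro divide_right_mono power_self_div_fact_le_exp) auto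
  also have "\<dots> = (1/4) ^ n" by (simp add: exp_of_nat_mult[symmetric] power_divide power_mult_distrib)
  finally show ?thesis .
qed

lemma dyson_diff_coefficient_le:
  fixes B \<kappa> :: real
  assumes "0 \<le> B" "B \<le> \<kappa>/12" "0 < \<kappa>" "0 < n"
  shows "(4 / (exp 1 * (2*\<kappa>/3 / real n))) ^ n * real n * B ^ (n - 1) / fact (n - 1)
    \<le> 6/\<kappa> * (real n ^ 2 * (1/2) ^ (n - 1))"
proof -
  obtain m where n: "n = Suc m" using assms by (cases n) auto
  have c: "4 / (exp 1 * (2*\<kappa>/3 / real n)) = 6 / \<kappa> * (real n / exp 1)"
    using assms by (simp add: field_simps)
  have "(6 / \<kappa> * (real n / exp 1)) ^ n * real n * B ^ m / fact m
      = (6 / \<kappa>) ^ n * real n ^ 2 * B ^ m * (real n ^ n / (real n * fact m) / exp 1 ^ n)"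
    using assms by (simp add: power_mult_distrib power_divide field_simps power2_eq_square)
  moreover have "fact n = real n * fact m" by (simp add: n del: of_nat_Suc)
  ultimately have "(4 / (exp 1 * (2*\<kappa>/3 / real n))) ^ n * real n * B ^ (n - 1) / fact (n - 1)
      = (6 / \<kappa>) ^ n * real n ^ 2 * B ^ m * (real n ^ n / fact n / exp 1 ^ n)"
    unfolding c by (simp add: n)
  also have "\<dots> \<le> (6 / \<kappa>) ^ n * real n ^ 2 * (\<kappa>/12) ^ m * 1"
  proof -
    have "real n ^ n / fact n / exp 1 ^ n \<le> exp (real n) / exp 1 ^ n"
      by (intro divide_right_mono power_self_div_fact_le_exp) auto
    also have "\<dots> = 1" by (simp add: exp_of_nat_mult[symmetric])
    finally show ?thesis using assms by (intro mult_mono power_mono) auto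
  qed
  also have "\<dots> = 6/\<kappa> * (real n ^ 2 * (1/2) ^ (n - 1))"
  proof -
    have "(6 / \<kappa>) ^ n * (\<kappa>/12) ^ m = 6/\<kappa> * ((6/\<kappa>) * (\<kappa>/12)) ^ m"
      by (simp only: n power_Suc power_mult_distrib mult.assoc)
    also have "(6/\<kappa>) * (\<kappa>/12) = 1/2" using assms by simp
    finally show ?thesis by (simp add: n algebra_simps)
  qed
  finally show ?thesis .
qed

lemma exp_neg_third_mult_le:
  fixes \<kappa> :: real
  assumes "0 < \<kappa>"
  shows "exp (- (\<kappa>/3)) * (192/\<kappa>) \<le> 288 / \<kappa>\<^sup>2"
proof -
  have "2 * (\<kappa>/3) \<le> exp 1 * (\<kappa>/3)"
    using exp_ge_add_one_self[of 1] assms by (intro mult_right_mono) auto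
  also have "\<dots> \<le> exp (\<kappa>/3)" by (rule exp_one_mult_le_exp)
  finally show ?thesis using assms by (simp add: exp_minus field_simps power2_eq_square)
qed

context spin_system
begin

lemma pot_norm_dyson_term_le_quarter_power:
  assumes \<Phi>: "regular_family t \<Phi>" and "0 \<le> t" "0 < \<kappa>" "pot_norm_integral \<kappa> \<Phi> t \<le> \<kappa>/24"
  shows "pot_norm \<Lambda> d (\<kappa>/3) (dyson_term \<Phi> \<Theta> n t) \<le> (1/4) ^ n * pot_norm \<Lambda> d \<kappa> \<Theta>"
proof (cases "n = 0")
  case True
  then show ?thesis using assms by (simp add: pot_norm_mono)
next
  case False
  define h where "h = 2*\<kappa>/3 / real n"
  have h: "0 < h" "real n * h \<le> \<kappa>" "\<kappa> - real n * h = \<kappa>/3" using False assms by (auto simp: h_def)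
  have "pot_norm \<Lambda> d (\<kappa>/3) (dyson_term \<Phi> \<Theta> n t)
      \<le> (4 / (exp 1 * h)) ^ n * pot_norm_integral \<kappa> \<Phi> t ^ n / fact n * pot_norm \<Lambda> d \<kappa> \<Theta>"
    using pot_norm_dyson_term_le[OF \<Phi> h(1,2) assms(2) order_refl] h(3) by simp
  also have "\<dots> \<le> (1/4) ^ n * pot_norm \<Lambda> d \<kappa> \<Theta>"
    unfolding h_def using assms False pot_norm_integral_nonneg[OF \<Phi> assms(2) order_refl]
    by (intro mult_right_mono dyson_term_coefficient_le pot_norm_nonneg) auto
  finally show ?thesis .
qed

lemma pot_norm_dyson_diff_le_square_half_power:
  assumes \<Phi>: "regular_family t \<Phi>" and \<Phi>': "regular_family t \<Phi>'" and "0 \<le> t" "0 < \<kappa>"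
    and small: "pot_norm_integral \<kappa> \<Phi> t \<le> \<kappa>/24" "pot_norm_integral \<kappa> \<Phi>' t \<le> \<kappa>/24"
  shows "pot_norm \<Lambda> d (\<kappa>/3) (pot_diff (dyson_term \<Phi> \<Theta> n t) (dyson_term \<Phi>' \<Theta> n t))
    \<le> 6/\<kappa> * (real n ^ 2 * (1/2) ^ (n - 1)) * pot_norm_integral \<kappa> (\<lambda>s. pot_diff (\<Phi> s) (\<Phi>' s)) t
      * pot_norm \<Lambda> d \<kappa> \<Theta>"
proof (cases "n = 0")
  case True
  then have "pot_diff (dyson_term \<Phi> \<Theta> n t) (dyson_term \<Phi>' \<Theta> n t) = (\<lambda>Z \<sigma> \<tau>. 0)"
    by (simp add: pot_diff_def)
  then show ?thesis using True by simp
next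
  case False
  define h where "h = 2*\<kappa>/3 / real n"
  have h: "0 < h" "real n * h \<le> \<kappa>" "\<kappa> - real n * h = \<kappa>/3" using False assms by (auto simp: h_def)
  interpret dyson_comparison \<Lambda> d \<Phi> \<Phi>' \<Theta> t \<kappa> h
    by unfold_locales (use \<Phi> \<Phi>' h in auto)
  have sum: "0 \<le> sum_integral t" "sum_integral t \<le> \<kappa>/12"
    using sum_integral_nonneg[OF assms(3) order_refl] sum_integral_eq[OF order_refl] small by auto
  have "pot_norm \<Lambda> d (\<kappa>/3) (dyson_diff n t)
      \<le> (commutator_factor ^ n * real n * sum_integral t ^ (n - 1) / fact (n - 1))
        * (diff_integral t * pot_norm \<Lambda> d \<kappa> \<Theta>)"
    using pot_norm_dyson_diff_le[OF h(2) assms(3) order_refl, unfolded h(3)] by (simp add: mult_ac)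
  also have "\<dots> \<le> 6/\<kappa> * (real n ^ 2 * (1/2) ^ (n - 1)) * (diff_integral t * pot_norm \<Lambda> d \<kappa> \<Theta>)"
    unfolding h_def using sum assms False pot_norm_integral_nonneg[OF regular_diff assms(3) order_refl]
    by (intro mult_right_mono dyson_diff_coefficient_le mult_nonneg_nonneg pot_norm_nonneg) auto
  finally show ?thesis by (simp add: mult_ac)
qed


lemma norm_entry_le_pot_norm:
  assumes anchored: "anchored_at x Q" and Z: "relevant_entry Z \<sigma> \<tau>" and k: "0 \<le> k"
  shows "cmod (Q Z \<sigma> \<tau>) \<le> pot_norm \<Lambda> d k Q"
proof (cases "x \<in> Z")
  case True
  have "cmod (Q Z \<sigma> \<tau>) \<le> opnorm \<C> (Q Z)"
    using Z by (intro norm_entry_le_opnorm[OF finite_configs]) (auto simp: relevant_entry_def)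
  also have "\<dots> \<le> pot_norm \<Lambda> d k Q"
    using Z True k by (intro opnorm_le_pot_norm) (auto simp: relevant_entry_def)
  finally show ?thesis .
next
  case False
  then have "Q Z \<sigma> \<tau> = 0" using anchored by (auto simp: anchored_at_def)
  then show ?thesis by (simp add: pot_norm_nonneg)
qed

lemma summable_dyson_series:
  assumes \<Phi>: "regular_family t \<Phi>" and "0 \<le> t" "0 < \<kappa>" "pot_norm_integral \<kappa> \<Phi> t \<le> \<kappa>/24"
    and anchored: "anchored_at x \<Theta>" and Z: "relevant_entry Z \<sigma> \<tau>"
  shows "summable (\<lambda>n. \<i> ^ n * dyson_term \<Phi> \<Theta> n t Z \<sigma> \<tau>)"
proof (rule summable_comparison_test)
  show "summable (\<lambda>n. (1/4::real) ^ n * pot_norm \<Lambda> d \<kappa> \<Theta>)"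
    by (intro summable_mult2 summable_geometric) simp
  have "cmod (dyson_term \<Phi> \<Theta> n t Z \<sigma> \<tau>) \<le> (1/4) ^ n * pot_norm \<Lambda> d \<kappa> \<Theta>" for n
  proof -
    have "cmod (dyson_term \<Phi> \<Theta> n t Z \<sigma> \<tau>) \<le> pot_norm \<Lambda> d (\<kappa>/3) (dyson_term \<Phi> \<Theta> n t)"
      using assms(3) by (intro norm_entry_le_pot_norm[OF anchored_at_dyson_term[OF anchored] Z]) simp
    also have "\<dots> \<le> (1/4) ^ n * pot_norm \<Lambda> d \<kappa> \<Theta>"
      by (rule pot_norm_dyson_term_le_quarter_power[OF assms(1-4)])
    finally show ?thesis .
  qed
  then show "\<exists>N. \<forall>n\<ge>N. norm (\<i> ^ n * dyson_term \<Phi> \<Theta> n t Z \<sigma> \<tau>) \<le> (1/4) ^ n * pot_norm \<Lambda> d \<kappa> \<Theta>"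
    by (simp add: norm_mult norm_power)
qed

text \<open>The factor \<open>e\<^sup>-\<^sup>k\<close> is gained from \<open>|Z| \<ge> 1\<close>.\<close>
lemma opnorm_assoc_op_anchored_le:
  assumes x: "x \<in> \<Lambda>" and anchored: "anchored_at x Q" and k: "0 \<le> k"
  shows "opnorm \<C> (\<lambda>\<sigma> \<tau>. \<Sum>Z\<in>Pow \<Lambda>. c * Q Z \<sigma> \<tau>) \<le> cmod c * (exp (- k) * pot_norm \<Lambda> d k Q)"
proof -
  have "opnorm \<C> (\<lambda>\<sigma> \<tau>. \<Sum>Z\<in>Pow \<Lambda>. c * Q Z \<sigma> \<tau>) \<le> (\<Sum>Z\<in>Pow \<Lambda>. cmod c * opnorm \<C> (Q Z))"
    by (intro order_trans[OF opnorm_sum_le[OF finite_configs]] sum_mono opnorm_scale_le[OF finite_configs])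
  also have "\<dots> = cmod c * (\<Sum>Z\<in>sets_at x. opnorm \<C> (Q Z))"
  proof -
    have "opnorm \<C> (Q Z) = 0" if "Z \<in> Pow \<Lambda> - sets_at x" for Z
    proof -
      have "opnorm \<C> (Q Z) = opnorm \<C> (\<lambda>_ _. 0)"
        using that anchored by (intro opnorm_cong) (auto simp: sets_at_def anchored_at_def)
      then show ?thesis by (simp add: opnorm_zero[OF finite_configs])
    qed
    then have "(\<Sum>Z\<in>Pow \<Lambda>. opnorm \<C> (Q Z)) = (\<Sum>Z\<in>sets_at x. opnorm \<C> (Q Z))"
      by (intro sum.mono_neutral_right) (auto simp: finite_\<Lambda> sets_at_def)
    then show ?thesis by (simp flip: sum_distrib_left)
  qed
  also have "\<dots> \<le> cmod c * (\<Sum>Z\<in>sets_at x. exp (- k) * (exp (k * real (card Z)) * opnorm \<C> (Q Z)))"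
  proof (intro mult_left_mono sum_mono norm_ge_zero)
    fix Z assume "Z \<in> sets_at x"
    then have "1 \<le> card Z" using finite_\<Lambda> by (auto simp: sets_at_def Suc_le_eq card_gt_0_iff intro: finite_subset)
    then have "k \<le> k * real (card Z)" using k by (simp add: mult_le_cancel_left1)
    then have "1 \<le> exp (- k) * exp (k * real (card Z))" by (simp add: exp_add[symmetric])
    from mult_right_mono[OF this opnorm_nonneg[OF finite_configs, of "Q Z"]]
    show "opnorm \<C> (Q Z) \<le> exp (- k) * (exp (k * real (card Z)) * opnorm \<C> (Q Z))"
      by (simp add: mult.assoc)
  qed
  also have "\<dots> \<le> cmod c * (exp (- k) * pot_norm \<Lambda> d k Q)"
    using site_weight_le_pot_norm[OF x, of k Q]
    by (simp add: site_weight_def sum_distrib_left[symmetric] mult_left_mono)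
  finally show ?thesis .
qed


context
  fixes \<Phi> \<Phi>' :: "real \<Rightarrow> 's pot" and \<Theta> :: "'s pot" and t \<kappa> :: real and x :: 's
  assumes \<Phi>: "regular_family t \<Phi>" and \<Phi>': "regular_family t \<Phi>'" and t: "0 \<le> t" and \<kappa>: "0 < \<kappa>"
    and small: "pot_norm_integral \<kappa> \<Phi> t \<le> \<kappa>/24" "pot_norm_integral \<kappa> \<Phi>' t \<le> \<kappa>/24"
    and anchored: "anchored_at x \<Theta>"
begin

lemma assoc_op_dyson_diff_eq_suminf:
  assumes "\<sigma> \<in> \<C>" "\<tau> \<in> \<C>"
  shows "summable (\<lambda>n. \<Sum>Z\<in>Pow \<Lambda>. \<i> ^ n * pot_diff (dyson_term \<Phi> \<Theta> n t) (dyson_term \<Phi>' \<Theta> n t) Z \<sigma> \<tau>)"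
    and "assoc_op \<Lambda> (dyson \<Lambda> d \<Phi> t \<Theta>) \<sigma> \<tau> - assoc_op \<Lambda> (dyson \<Lambda> d \<Phi>' t \<Theta>) \<sigma> \<tau>
      = (\<Sum>n. \<Sum>Z\<in>Pow \<Lambda>. \<i> ^ n * pot_diff (dyson_term \<Phi> \<Theta> n t) (dyson_term \<Phi>' \<Theta> n t) Z \<sigma> \<tau>)"
proof -
  note summable = summable_dyson_series[OF \<Phi> t \<kappa> small(1) anchored]
    summable_dyson_series[OF \<Phi>' t \<kappa> small(2) anchored]
  have summable_diff: "summable (\<lambda>n. \<i> ^ n * pot_diff (dyson_term \<Phi> \<Theta> n t) (dyson_term \<Phi>' \<Theta> n t) Z \<sigma> \<tau>)"
    if "Z \<in> Pow \<Lambda>" for Z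
    using summable_diff[OF summable] that assms by (simp add: relevant_entry_def pot_diff_def right_diff_distrib)
  then show "summable (\<lambda>n. \<Sum>Z\<in>Pow \<Lambda>. \<i> ^ n * pot_diff (dyson_term \<Phi> \<Theta> n t) (dyson_term \<Phi>' \<Theta> n t) Z \<sigma> \<tau>)"
    by (rule summable_sum)
  have "assoc_op \<Lambda> (dyson \<Lambda> d \<Phi> t \<Theta>) \<sigma> \<tau> - assoc_op \<Lambda> (dyson \<Lambda> d \<Phi>' t \<Theta>) \<sigma> \<tau>
      = (\<Sum>Z\<in>Pow \<Lambda>. \<Sum>n. \<i> ^ n * pot_diff (dyson_term \<Phi> \<Theta> n t) (dyson_term \<Phi>' \<Theta> n t) Z \<sigma> \<tau>)"
    unfolding assoc_op_def sum_subtractf[symmetric] using assms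
    by (intro sum.cong refl)
       (simp add: relevant_entry_def dyson_eq_suminf[OF \<Phi> t] dyson_eq_suminf[OF \<Phi>' t]
         suminf_diff[OF summable] pot_diff_def right_diff_distrib)
  also have "\<dots> = (\<Sum>n. \<Sum>Z\<in>Pow \<Lambda>. \<i> ^ n * pot_diff (dyson_term \<Phi> \<Theta> n t) (dyson_term \<Phi>' \<Theta> n t) Z \<sigma> \<tau>)"
    using summable_diff by (intro suminf_sum[symmetric]) auto
  finally show "assoc_op \<Lambda> (dyson \<Lambda> d \<Phi> t \<Theta>) \<sigma> \<tau> - assoc_op \<Lambda> (dyson \<Lambda> d \<Phi>' t \<Theta>) \<sigma> \<tau>
      = (\<Sum>n. \<Sum>Z\<in>Pow \<Lambda>. \<i> ^ n * pot_diff (dyson_term \<Phi> \<Theta> n t) (dyson_term \<Phi>' \<Theta> n t) Z \<sigma> \<tau>)" .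
qed

lemma opnorm_dyson_diff_term_le:
  assumes x: "x \<in> \<Lambda>"
  shows "opnorm \<C> (\<lambda>\<sigma> \<tau>. \<Sum>Z\<in>Pow \<Lambda>. \<i> ^ n * pot_diff (dyson_term \<Phi> \<Theta> n t) (dyson_term \<Phi>' \<Theta> n t) Z \<sigma> \<tau>)
    \<le> exp (- (\<kappa>/3)) * (48/\<kappa>) * pot_norm_integral \<kappa> (\<lambda>s. pot_diff (\<Phi> s) (\<Phi>' s)) t
      * pot_norm \<Lambda> d \<kappa> \<Theta> * (3/4) ^ n"
proof -
  have "anchored_at x (pot_diff (dyson_term \<Phi> \<Theta> n t) (dyson_term \<Phi>' \<Theta> n t))"
    using anchored_at_dyson_term[OF anchored, of \<Phi> n t] anchored_at_dyson_term[OF anchored, of \<Phi>' n t]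
    unfolding anchored_at_def pot_diff_def by (metis diff_self)
  from opnorm_assoc_op_anchored_le[OF x this, of "\<kappa>/3" "\<i> ^ n"] \<kappa>
  have "opnorm \<C> (\<lambda>\<sigma> \<tau>. \<Sum>Z\<in>Pow \<Lambda>. \<i> ^ n * pot_diff (dyson_term \<Phi> \<Theta> n t) (dyson_term \<Phi>' \<Theta> n t) Z \<sigma> \<tau>)
      \<le> exp (- (\<kappa>/3)) * pot_norm \<Lambda> d (\<kappa>/3) (pot_diff (dyson_term \<Phi> \<Theta> n t) (dyson_term \<Phi>' \<Theta> n t))"
    by (simp add: norm_power)
  also have "\<dots> \<le> exp (- (\<kappa>/3)) * (6/\<kappa> * (8 * (3/4) ^ n)
      * pot_norm_integral \<kappa> (\<lambda>s. pot_diff (\<Phi> s) (\<Phi>' s)) t * pot_norm \<Lambda> d \<kappa> \<Theta>)"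
    using pot_norm_integral_nonneg[OF regular_family_diff[OF \<Phi> \<Phi>'] t order_refl] \<kappa>
    by (intro mult_left_mono order_trans[OF pot_norm_dyson_diff_le_square_half_power[OF \<Phi> \<Phi>' t \<kappa> small]]
        mult_right_mono square_mult_half_power_le) (auto simp: pot_norm_nonneg)
  finally show ?thesis by (simp add: mult_ac)
qed

lemma opnorm_dyson_diff_le:
  assumes x: "x \<in> \<Lambda>"
  shows "opnorm \<C> (\<lambda>\<sigma> \<tau>. assoc_op \<Lambda> (dyson \<Lambda> d \<Phi> t \<Theta>) \<sigma> \<tau> - assoc_op \<Lambda> (dyson \<Lambda> d \<Phi>' t \<Theta>) \<sigma> \<tau>)
    \<le> exp (- (\<kappa>/3)) * (192/\<kappa>) * pot_norm_integral \<kappa> (\<lambda>s. pot_diff (\<Phi> s) (\<Phi>' s)) t * pot_norm \<Lambda> d \<kappa> \<Theta>"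
proof -
  define c where "c = exp (- (\<kappa>/3)) * (48/\<kappa>) * pot_norm_integral \<kappa> (\<lambda>s. pot_diff (\<Phi> s) (\<Phi>' s)) t
    * pot_norm \<Lambda> d \<kappa> \<Theta>"
  have "opnorm \<C> (\<lambda>\<sigma> \<tau>. assoc_op \<Lambda> (dyson \<Lambda> d \<Phi> t \<Theta>) \<sigma> \<tau> - assoc_op \<Lambda> (dyson \<Lambda> d \<Phi>' t \<Theta>) \<sigma> \<tau>)
      = opnorm \<C> (\<lambda>\<sigma> \<tau>. \<Sum>n. \<Sum>Z\<in>Pow \<Lambda>. \<i> ^ n * pot_diff (dyson_term \<Phi> \<Theta> n t) (dyson_term \<Phi>' \<Theta> n t) Z \<sigma> \<tau>)"
    by (rule opnorm_cong) (rule assoc_op_dyson_diff_eq_suminf(2))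
  also have "\<dots> \<le> (\<Sum>n. c * (3/4) ^ n)"
    using assoc_op_dyson_diff_eq_suminf(1) opnorm_dyson_diff_term_le[OF x]
    by (intro opnorm_suminf_le[OF finite_configs] summable_mult summable_geometric) (auto simp: c_def)
  also have "\<dots> = c * 4"
    by (simp add: suminf_mult summable_geometric suminf_geometric)
  finally show ?thesis by (simp add: c_def mult_ac)
qed

end

lemma dyson_single_pot_empty:
  assumes "regular_family t \<Phi>" "0 \<le> t" "relevant_entry Z \<sigma> \<tau>"
  shows "dyson \<Lambda> d \<Phi> t (single_pot {} Ob) Z \<sigma> \<tau> = single_pot {} Ob Z \<sigma> \<tau>"
proof -
  have "(\<lambda>n. \<i> ^ n * dyson_term \<Phi> (single_pot {} Ob) n t Z \<sigma> \<tau>)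
      = (\<lambda>n. if n = 0 then single_pot {} Ob Z \<sigma> \<tau> else 0)"
  proof
    fix n show "\<i> ^ n * dyson_term \<Phi> (single_pot {} Ob) n t Z \<sigma> \<tau> = (if n = 0 then single_pot {} Ob Z \<sigma> \<tau> else 0)"
      by (cases n) (simp_all add: dyson_term_single_pot_empty del: dyson_term.simps(2))
  qed
  then show ?thesis
    using dyson_eq_suminf[OF assms] sums_unique[OF sums_single[of 0 "\<lambda>_. single_pot {} Ob Z \<sigma> \<tau>"]]
    by simp
qed

lemma pot_norm_single_pot_le: "pot_norm \<Lambda> d \<kappa> (single_pot S Ob) \<le> exp (\<kappa> * real (card S)) * opnorm \<C> Ob"
proof (rule pot_norm_leI)
  show "0 \<le> exp (\<kappa> * real (card S)) * opnorm \<C> Ob" by (simp add: opnorm_nonneg[OF finite_configs])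
  fix x
  have "site_weight \<kappa> (single_pot S Ob) x
      = (\<Sum>Z\<in>sets_at x. if Z = S then exp (\<kappa> * real (card S)) * opnorm \<C> Ob else 0)"
    unfolding site_weight_def
    by (intro sum.cong refl) (auto simp: single_pot_def opnorm_zero[OF finite_configs])
  also have "\<dots> \<le> exp (\<kappa> * real (card S)) * opnorm \<C> Ob"
    by (simp add: sum.delta[OF finite_sets_at] opnorm_nonneg[OF finite_configs])
  finally show "site_weight \<kappa> (single_pot S Ob) x \<le> exp (\<kappa> * real (card S)) * opnorm \<C> Ob" .
qed

lemma opnorm_dyson_single_pot_diff_le:
  assumes \<Phi>: "regular_family t \<Phi>" and \<Phi>': "regular_family t \<Phi>'" and t: "0 \<le> t" and \<kappa>: "0 < \<kappa>"
    and small: "pot_norm_integral \<kappa> \<Phi> t \<le> \<kappa>/24" "pot_norm_integral \<kappa> \<Phi>' t \<le> \<kappa>/24"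
    and S: "S \<subseteq> \<Lambda>"
  shows "opnorm \<C> (\<lambda>\<sigma> \<tau>. assoc_op \<Lambda> (dyson \<Lambda> d \<Phi> t (single_pot S Ob)) \<sigma> \<tau>
      - assoc_op \<Lambda> (dyson \<Lambda> d \<Phi>' t (single_pot S Ob)) \<sigma> \<tau>)
    \<le> exp (- (\<kappa>/3)) * (192/\<kappa>) * pot_norm_integral \<kappa> (\<lambda>s. pot_diff (\<Phi> s) (\<Phi>' s)) t
      * (exp (\<kappa> * real (card S)) * opnorm \<C> Ob)"
proof (cases "S = {}")
  case True
  then have "opnorm \<C> (\<lambda>\<sigma> \<tau>. assoc_op \<Lambda> (dyson \<Lambda> d \<Phi> t (single_pot S Ob)) \<sigma> \<tau>
      - assoc_op \<Lambda> (dyson \<Lambda> d \<Phi>' t (single_pot S Ob)) \<sigma> \<tau>) = opnorm \<C> (\<lambda>_ _. 0)"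
    using assms by (intro opnorm_cong) (simp add: assoc_op_def relevant_entry_def dyson_single_pot_empty)
  then show ?thesis
    using \<kappa> pot_norm_integral_nonneg[OF regular_family_diff[OF \<Phi> \<Phi>'] t order_refl]
    by (simp add: opnorm_zero[OF finite_configs] opnorm_nonneg[OF finite_configs])
next
  case False
  then obtain x where x: "x \<in> S" by blast
  have "anchored_at x (single_pot S Ob)"
    using x by (auto simp: anchored_at_def single_pot_def)
  moreover have "x \<in> \<Lambda>" using x S by auto
  ultimately have "opnorm \<C> (\<lambda>\<sigma> \<tau>. assoc_op \<Lambda> (dyson \<Lambda> d \<Phi> t (single_pot S Ob)) \<sigma> \<tau>
      - assoc_op \<Lambda> (dyson \<Lambda> d \<Phi>' t (single_pot S Ob)) \<sigma> \<tau>)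
    \<le> exp (- (\<kappa>/3)) * (192/\<kappa>) * pot_norm_integral \<kappa> (\<lambda>s. pot_diff (\<Phi> s) (\<Phi>' s)) t
      * pot_norm \<Lambda> d \<kappa> (single_pot S Ob)"
    by (intro opnorm_dyson_diff_le[OF assms(1-6)])
  also have "\<dots> \<le> exp (- (\<kappa>/3)) * (192/\<kappa>) * pot_norm_integral \<kappa> (\<lambda>s. pot_diff (\<Phi> s) (\<Phi>' s)) t
      * (exp (\<kappa> * real (card S)) * opnorm \<C> Ob)"
    using \<kappa> pot_norm_integral_nonneg[OF regular_family_diff[OF \<Phi> \<Phi>'] t order_refl]
    by (intro mult_left_mono pot_norm_single_pot_le) auto
  finally show ?thesis .
qed

lemma pot_norm_integral_eq_tpot_norm: "0 < t \<Longrightarrow> pot_norm_integral \<kappa> \<Psi> t = t * tpot_norm \<Lambda> d \<kappa> t \<Psi>"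
  by (simp add: pot_norm_integral_def tpot_norm_def)

lemma tpot_norm_nonneg: "regular_family t \<Psi> \<Longrightarrow> 0 < t \<Longrightarrow> 0 \<le> tpot_norm \<Lambda> d \<kappa> t \<Psi>"
  using pot_norm_integral_nonneg[of t \<Psi> t \<kappa>] pot_norm_integral_eq_tpot_norm[of t \<kappa> \<Psi>]
  by (simp add: zero_le_mult_iff)

lemma opnorm_dyson_single_pot_diff_le_tpot_norm:
  assumes t: "0 < t" and \<kappa>: "0 < \<kappa>" and \<Phi>: "regular_family t \<Phi>" and \<Phi>': "regular_family t \<Phi>'"
    and S: "S \<subseteq> \<Lambda>" and small: "24 * max (tpot_norm \<Lambda> d \<kappa> t \<Phi>) (tpot_norm \<Lambda> d \<kappa> t \<Phi>') * t \<le> \<kappa>"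
  shows "opnorm \<C> (\<lambda>\<sigma> \<tau>. assoc_op \<Lambda> (dyson \<Lambda> d \<Phi> t (single_pot S Ob)) \<sigma> \<tau>
      - assoc_op \<Lambda> (dyson \<Lambda> d \<Phi>' t (single_pot S Ob)) \<sigma> \<tau>)
    \<le> exp (- (\<kappa>/3)) * (192/\<kappa>) * (exp (\<kappa> * real (card S)) * opnorm \<C> Ob * t
      * tpot_norm \<Lambda> d \<kappa> t (\<lambda>s. pot_diff (\<Phi> s) (\<Phi>' s)))"
proof -
  have "pot_norm_integral \<kappa> \<Psi> t \<le> \<kappa>/24"
    if "tpot_norm \<Lambda> d \<kappa> t \<Psi> \<le> max (tpot_norm \<Lambda> d \<kappa> t \<Phi>) (tpot_norm \<Lambda> d \<kappa> t \<Phi>')" for \<Psi>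
  proof -
    have "t * tpot_norm \<Lambda> d \<kappa> t \<Psi> \<le> t * max (tpot_norm \<Lambda> d \<kappa> t \<Phi>) (tpot_norm \<Lambda> d \<kappa> t \<Phi>')"
      using that t by (intro mult_left_mono) auto
    then show ?thesis using small by (simp add: pot_norm_integral_eq_tpot_norm[OF t] mult_ac)
  qed
  from opnorm_dyson_single_pot_diff_le[OF \<Phi> \<Phi>' _ \<kappa> this this S] t
  show ?thesis by (simp add: pot_norm_integral_eq_tpot_norm[OF t] mult_ac)
qed

end

theorem lemma8:
  fixes \<Lambda> :: "'s set" and d :: "'s \<Rightarrow> nat"
    and \<Phi> \<Phi>' :: "real \<Rightarrow> 's pot" and Ob :: "'s op" and S :: "'s set"
    and t \<kappa> :: real
  assumes "finite \<Lambda>" and "\<forall>x\<in>\<Lambda>. 0 < d x"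
    and "0 < t" and "0 < \<kappa>"
    and "tpot \<Lambda> d t \<Phi>" and "tpot \<Lambda> d t \<Phi>'"
    and "S \<subseteq> \<Lambda>" and "supported_on \<Lambda> d S Ob"
    and "24 * max (tpot_norm \<Lambda> d \<kappa> t \<Phi>) (tpot_norm \<Lambda> d \<kappa> t \<Phi>') * t \<le> \<kappa>"
  shows "let lam = max (tpot_norm \<Lambda> d \<kappa> t \<Phi>) (tpot_norm \<Lambda> d \<kappa> t \<Phi>');
             M = 288 / \<kappa>\<^sup>2;
             C = 1 + M * lam * t
         in opnorm (configs \<Lambda> d)
              (\<lambda>\<sigma> \<tau>. assoc_op \<Lambda> (dyson \<Lambda> d \<Phi> t (single_pot S Ob)) \<sigma> \<tau>
                    - assoc_op \<Lambda> (dyson \<Lambda> d \<Phi>' t (single_pot S Ob)) \<sigma> \<tau>)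
            \<le> C ^ 3 * M * exp (\<kappa> * real (card S)) * opnorm (configs \<Lambda> d) Ob * t
               * tpot_norm \<Lambda> d \<kappa> t (\<lambda>s. pot_diff (\<Phi> s) (\<Phi>' s))"
proof -
  interpret spin_system \<Lambda> d by unfold_locales (rule assms(1))
  have \<Phi>: "regular_family t \<Phi>" and \<Phi>': "regular_family t \<Phi>'"
    using assms(5,6) by (simp_all add: regular_family_if_tpot)
  define lam where "lam = max (tpot_norm \<Lambda> d \<kappa> t \<Phi>) (tpot_norm \<Lambda> d \<kappa> t \<Phi>')"
  define M where "M = 288 / \<kappa>\<^sup>2"
  have "1 \<le> (1 + M * lam * t) ^ 3"
    using tpot_norm_nonneg[OF \<Phi> assms(3)] assms(3) by (simp add: M_def lam_def le_max_iff_disj)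
  then have factor: "exp (- (\<kappa>/3)) * (192/\<kappa>) \<le> (1 + M * lam * t) ^ 3 * M"
    using exp_neg_third_mult_le[OF assms(4)] mult_right_mono[of 1 _ M] by (fastforce simp: M_def)
  have "opnorm \<C> (\<lambda>\<sigma> \<tau>. assoc_op \<Lambda> (dyson \<Lambda> d \<Phi> t (single_pot S Ob)) \<sigma> \<tau>
      - assoc_op \<Lambda> (dyson \<Lambda> d \<Phi>' t (single_pot S Ob)) \<sigma> \<tau>)
    \<le> exp (- (\<kappa>/3)) * (192/\<kappa>) * (exp (\<kappa> * real (card S)) * opnorm \<C> Ob * t
      * tpot_norm \<Lambda> d \<kappa> t (\<lambda>s. pot_diff (\<Phi> s) (\<Phi>' s)))"
    by (rule opnorm_dyson_single_pot_diff_le_tpot_norm[OF assms(3,4) \<Phi> \<Phi>' assms(7,9)])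
  also have "\<dots> \<le> (1 + M * lam * t) ^ 3 * M * (exp (\<kappa> * real (card S)) * opnorm \<C> Ob * t
      * tpot_norm \<Lambda> d \<kappa> t (\<lambda>s. pot_diff (\<Phi> s) (\<Phi>' s)))"
    using assms(3) tpot_norm_nonneg[OF regular_family_diff[OF \<Phi> \<Phi>'] assms(3)]
    by (intro mult_right_mono[OF factor]) (simp add: opnorm_nonneg[OF finite_configs])
  finally show ?thesis by (simp add: Let_def lam_def M_def mult_ac)
qed

end
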